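(* Let $T$ be a doubled graph in $\mathcal F$ that contains no antihole of length six. Then: (1) $T$ is either complete or has an even pair; (2) if $T$ is favorable, then $T$ has an even pair disjoint from its switchable component.
   Context: A trigraph $T$ consists of a finite set $V(T)$ and a map $\theta:\binom{V(T)}{2}\to\{-1,0,1\}$. Two distinct vertices $u,v$ are strongly adjacent if $\theta(uv)=1$, strongly antiadjacent if $\theta(uv)=-1$, and semiadjacent (a switchable pair) if $\theta(uv)=0$; they are adjacent if $\theta(uv)\in\{0,1\}$ and antiadjacent if $\theta(uv)\in\{0,-1\}$. $N(v)$ is the set of vertices adjacent to $v$. An edge (antiedge) is an adjacent (antiadjacent) pair; a strong edge (strong antiedge) is a strongly adjacent (strongly antiadjacent) pair. The complement $\overline T$ has vertex set $V(T)$ and adjacency function $-\theta$. For $X\subseteq V(T)$, $T|X$ is the trigraph on $X$ with $\theta$ restricted, and $T\setminus X=T|(V(T)\setminus X)$; $T$ contains $H$ if $H$ is isomorphic to some $T|X$. A clique is a set of pairwise adjacent vertices; $T$ is complete if $V(T)$ is a clique. A set $X$ is connected if the graph on $X$ whose edges are the adjacent pairs of $T|X$ is connected, and anticonnected if the graph on $X$ whose edges are the antiadjacent pairs of $T|X$ is connected; components (anticomponents) are maximal connected (anticonnected) subsets. A path is a sequence of distinct vertices $p_1,\dots,p_k$ such that $p_i,p_j$ are adjacent when $|i-j|=1$ and antiadjacent when $|i-j|>1$; its length is $k-1$. A hole of length $k\ge5$ consists of vertices $h_1,\dots,h_k$ with $h_i,h_j$ adjacent if $|i-j|\in\{1,k-1\}$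 and antiadjacent otherwise; an antihole is an induced subtrigraph whose complement is a hole of $\overline T$ (length = number of vertices). $T$ is Berge if it contains no hole of odd length and no antihole of odd length. An even pair of $T$ is a strongly antiadjacent pair $\{u,v\}$ such that every path from $u$ to $v$ in $T$ has even length. $\Sigma(T)$ is the graph on $V(T)$ whose edges are the switchable pairs of $T$; a switchable component is a connected component of $\Sigma(T)$ with at least two vertices. $\mathcal F$ is the class of Berge trigraphs $T$ such that: (1) $T$ has at most one switchable component, and it has at most two edges; (2) if the switchable component has exactly one edge $xy$, then $N(x)\cap N(y)=\emptyset$ (it is called small); (3) if it has two edges, with $v$ the vertex of degree two in $\Sigma(T)$ and $x,y$ its neighbours, then $v$ is strongly anticomplete to $V(T)\setminus\{v,x,y\}$, $x$ is strongly antiadjacent to $y$, and $N(x)\cap N(y)=\{v\}$ (it is called light). For $T\in\mathcal F$, $D$ denotes the vertex set of its switchable component ($D=\emptyset$ if $T$ has no switchable pair). A pair $\{u,v\}$ is disjoint from the switchable component if $\{u,v\}\cap D=\emptyset$. A trigraph $T\in\mathcal F$ is favorable if (1) $|V(T)|\ge5$; (2) $T$ has a strongly antiadjacent pair $\{u,v\}$ disjoint from $D$; and (3) if $D=\{x,y\}$ is small, then at least one of $V(T)\setminus(D\cup N(x))$, $V(T)\setminus(D\cup N(y))$ is not a clique. A good partition of $T$ is a partition $(X,Y)$ of $V(T)$ such that every component of $T|X$ and every anticomponent of $T|Y$ has at most two vertices, no switchable pair has one end in $X$ and the other in $Y$, and for every component $C_x$ of $T|X$ and every anticomponent $C_y$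 of $T|Y$, every vertex of $C_x\cup C_y$ is incident with at most one strong edge and at most one strong antiedge between $C_x$ and $C_y$. $T$ is a doubled graph if it has a good partition. *)

theory Defs
  imports Main
begin

definition trigraph :: "'a set \<Rightarrow> ('a \<Rightarrow> 'a \<Rightarrow> int) \<Rightarrow> bool" where
  "trigraph V \<theta> \<longleftrightarrow> finite V \<and>
     (\<forall>u\<in>V. \<forall>v\<in>V. u \<noteq> v \<longrightarrow> \<theta> u v = \<theta> v u \<and> \<theta> u v \<in> {-1, 0, 1})"

definition adj :: "('a \<Rightarrow> 'a \<Rightarrow> int) \<Rightarrow> 'a \<Rightarrow> 'a \<Rightarrow> bool" where
  "adj \<theta> u v \<longleftrightarrow> u \<noteq> v \<and> \<theta> u v \<in> {0, 1}"

definition antiadj :: "('a \<Rightarrow> 'a \<Rightarrow> int) \<Rightarrow> 'a \<Rightarrow> 'a \<Rightarrow> bool" where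
  "antiadj \<theta> u v \<longleftrightarrow> u \<noteq> v \<and> \<theta> u v \<in> {0, -1}"

definition nbhd :: "'a set \<Rightarrow> ('a \<Rightarrow> 'a \<Rightarrow> int) \<Rightarrow> 'a \<Rightarrow> 'a set" where
  "nbhd V \<theta> v = {u \<in> V. adj \<theta> v u}"

definition clique :: "('a \<Rightarrow> 'a \<Rightarrow> int) \<Rightarrow> 'a set \<Rightarrow> bool" where
  "clique \<theta> X \<longleftrightarrow> (\<forall>u\<in>X. \<forall>v\<in>X. u \<noteq> v \<longrightarrow> adj \<theta> u v)"

definition complete_tg :: "'a set \<Rightarrow> ('a \<Rightarrow> 'a \<Rightarrow> int) \<Rightarrow> bool" where
  "complete_tg V \<theta> \<longleftrightarrow> clique \<theta> V"

definition is_path :: "'a set \<Rightarrow> ('a \<Rightarrow> 'a \<Rightarrow> int) \<Rightarrow> 'a list \<Rightarrow> bool" where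
  "is_path V \<theta> ps \<longleftrightarrow> ps \<noteq> [] \<and> distinct ps \<and> set ps \<subseteq> V \<and>
     (\<forall>i<length ps. \<forall>j<length ps.
        (i + 1 = j \<or> j + 1 = i \<longrightarrow> adj \<theta> (ps ! i) (ps ! j)) \<and>
        (i + 1 < j \<or> j + 1 < i \<longrightarrow> antiadj \<theta> (ps ! i) (ps ! j)))"

definition is_hole :: "'a set \<Rightarrow> ('a \<Rightarrow> 'a \<Rightarrow> int) \<Rightarrow> 'a list \<Rightarrow> bool" where
  "is_hole V \<theta> hs \<longleftrightarrow> length hs \<ge> 5 \<and> distinct hs \<and> set hs \<subseteq> V \<and>
     (\<forall>i<length hs. \<forall>j<length hs. i \<noteq> j \<longrightarrow>
        (if j = Suc i mod length hs \<or> i = Suc j mod length hs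
         then adj \<theta> (hs ! i) (hs ! j) else antiadj \<theta> (hs ! i) (hs ! j)))"

text \<open>Antihole: a hole of the complement trigraph (adjacency function -theta).\<close>
definition is_antihole :: "'a set \<Rightarrow> ('a \<Rightarrow> 'a \<Rightarrow> int) \<Rightarrow> 'a list \<Rightarrow> bool" where
  "is_antihole V \<theta> hs \<longleftrightarrow> is_hole V (\<lambda>u v. - \<theta> u v) hs"

definition berge :: "'a set \<Rightarrow> ('a \<Rightarrow> 'a \<Rightarrow> int) \<Rightarrow> bool" where
  "berge V \<theta> \<longleftrightarrow> trigraph V \<theta> \<and>
     \<not> (\<exists>hs. is_hole V \<theta> hs \<and> odd (length hs)) \<and>
     \<not> (\<exists>hs. is_antihole V \<theta> hs \<and> odd (length hs))"

definition even_pair :: "'a set \<Rightarrow> ('a \<Rightarrow> 'a \<Rightarrow> int) \<Rightarrow> 'a \<Rightarrow> 'a \<Rightarrow> bool" where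
  "even_pair V \<theta> u v \<longleftrightarrow> u \<in> V \<and> v \<in> V \<and> u \<noteq> v \<and> \<theta> u v = -1 \<and>
     (\<forall>ps. is_path V \<theta> ps \<and> hd ps = u \<and> last ps = v \<longrightarrow> even (length ps - 1))"

definition sw_rel :: "'a set \<Rightarrow> ('a \<Rightarrow> 'a \<Rightarrow> int) \<Rightarrow> ('a \<times> 'a) set" where
  "sw_rel V \<theta> = {(u, v). u \<in> V \<and> v \<in> V \<and> u \<noteq> v \<and> \<theta> u v = 0}"

definition sw_components :: "'a set \<Rightarrow> ('a \<Rightarrow> 'a \<Rightarrow> int) \<Rightarrow> 'a set set" where
  "sw_components V \<theta> =
     {C. \<exists>v\<in>V. C = {u. (v, u) \<in> (sw_rel V \<theta>)\<^sup>*} \<and> card C \<ge> 2}"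

definition sw_edges :: "'a set \<Rightarrow> ('a \<Rightarrow> 'a \<Rightarrow> int) \<Rightarrow> 'a set \<Rightarrow> 'a set set" where
  "sw_edges V \<theta> C = {{u, v} | u v. u \<in> C \<and> v \<in> C \<and> (u, v) \<in> sw_rel V \<theta>}"

text \<open>D: the vertex set of the switchable component (empty if there is none).\<close>
definition sw_D :: "'a set \<Rightarrow> ('a \<Rightarrow> 'a \<Rightarrow> int) \<Rightarrow> 'a set" where
  "sw_D V \<theta> = \<Union> (sw_components V \<theta>)"

definition class_F :: "'a set \<Rightarrow> ('a \<Rightarrow> 'a \<Rightarrow> int) \<Rightarrow> bool" where
  "class_F V \<theta> \<longleftrightarrow> berge V \<theta> \<and>
     (\<forall>C\<in>sw_components V \<theta>. \<forall>C'\<in>sw_components V \<theta>. C = C') \<and>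
     (\<forall>C\<in>sw_components V \<theta>.
        card (sw_edges V \<theta> C) \<le> 2 \<and>
        (\<forall>x y. sw_edges V \<theta> C = {{x, y}} \<longrightarrow> nbhd V \<theta> x \<inter> nbhd V \<theta> y = {}) \<and>
        (\<forall>v x y. x \<noteq> y \<and> sw_edges V \<theta> C = {{v, x}, {v, y}} \<longrightarrow>
           (\<forall>w\<in>V - {v, x, y}. \<theta> v w = -1) \<and> \<theta> x y = -1 \<and>
           nbhd V \<theta> x \<inter> nbhd V \<theta> y = {v}))"

definition favorable :: "'a set \<Rightarrow> ('a \<Rightarrow> 'a \<Rightarrow> int) \<Rightarrow> bool" where
  "favorable V \<theta> \<longleftrightarrow> class_F V \<theta> \<and> card V \<ge> 5 \<and>
     (\<exists>u\<in>V. \<exists>v\<in>V. u \<noteq> v \<and> \<theta> u v = -1 \<and> u \<notin> sw_D V \<theta> \<and> v \<notin> sw_D V \<theta>) \<and>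
     (\<forall>x y. x \<noteq> y \<and> sw_D V \<theta> = {x, y} \<longrightarrow>
        \<not> clique \<theta> (V - (sw_D V \<theta> \<union> nbhd V \<theta> x)) \<or>
        \<not> clique \<theta> (V - (sw_D V \<theta> \<union> nbhd V \<theta> y)))"

text \<open>Components of T|X w.r.t. a relation R (adjacency gives components,
  antiadjacency gives anticomponents).\<close>
definition comps_of :: "'a set \<Rightarrow> ('a \<Rightarrow> 'a \<Rightarrow> bool) \<Rightarrow> 'a set set" where
  "comps_of X R = {{u \<in> X. (v, u) \<in> {(a, b). a \<in> X \<and> b \<in> X \<and> R a b}\<^sup>*} | v. v \<in> X}"

definition good_partition :: "'a set \<Rightarrow> ('a \<Rightarrow> 'a \<Rightarrow> int) \<Rightarrow> 'a set \<Rightarrow> 'a set \<Rightarrow> bool" where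
  "good_partition V \<theta> X Y \<longleftrightarrow> X \<union> Y = V \<and> X \<inter> Y = {} \<and>
     (\<forall>C\<in>comps_of X (adj \<theta>). card C \<le> 2) \<and>
     (\<forall>C\<in>comps_of Y (antiadj \<theta>). card C \<le> 2) \<and>
     (\<forall>x\<in>X. \<forall>y\<in>Y. \<theta> x y \<noteq> 0) \<and>
     (\<forall>Cx\<in>comps_of X (adj \<theta>). \<forall>Cy\<in>comps_of Y (antiadj \<theta>). \<forall>w\<in>Cx \<union> Cy.
        card {z. ((w \<in> Cx \<and> z \<in> Cy) \<or> (w \<in> Cy \<and> z \<in> Cx)) \<and> \<theta> w z = 1} \<le> 1 \<and>
        card {z. ((w \<in> Cx \<and> z \<in> Cy) \<or> (w \<in> Cy \<and> z \<in> Cx)) \<and> \<theta> w z = -1} \<le> 1)"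

definition doubled_graph :: "'a set \<Rightarrow> ('a \<Rightarrow> 'a \<Rightarrow> int) \<Rightarrow> bool" where
  "doubled_graph V \<theta> \<longleftrightarrow> (\<exists>X Y. good_partition V \<theta> X Y)"

end

theory Submission
  imports Defs
begin

text \<open>
  In a good partition \<open>(X, Y)\<close>, \<open>T|X\<close> is a matching and \<open>T|Y\<close> the complement of one, all
  pairs between \<open>X\<close> and \<open>Y\<close> are strong, and every vertex of \<open>X\<close> is strongly adjacent to
  exactly one end of each antiedge inside \<open>Y\<close> (dually for \<open>Y\<close> and the edges inside \<open>X\<close>).

  Evenness of a strong antiedge \<open>uv\<close> is certified locally: the third vertex of any path from
  \<open>u\<close> to \<open>v\<close> with at least four vertices lies in \<open>third_candidates V \<theta> u v\<close>. If that set is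
  empty, or if it and \<open>third_candidates V \<theta> v u\<close> lie in a common singleton, then every such
  path has exactly five vertices, and \<open>uv\<close> is an even pair.

  An edge of \<open>X\<close> together with two disjoint antiedges of \<open>Y\<close> induces an antihole of length six,
  so once \<open>X\<close> has an edge, every vertex of \<open>Y\<close> outside a single antiedge is strongly adjacent
  to the rest of \<open>Y\<close>. What remains is a case analysis on the edges of \<open>X\<close> and the antiedges
  of \<open>Y\<close>, each case either exhibiting a pair that meets the certificate or showing that \<open>T\<close> is
  complete; for favorable \<open>T\<close> it is carried out relative to the unique switchable pair.
\<close>

definition third_candidates :: "'a set \<Rightarrow> ('a \<Rightarrow> 'a \<Rightarrow> int) \<Rightarrow> 'a \<Rightarrow> 'a \<Rightarrow> 'a set" where
  "third_candidates V \<theta> u v =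
     {z \<in> V. z \<noteq> u \<and> z \<noteq> v \<and> \<theta> z u \<noteq> 1 \<and> (\<exists>w\<in>V. adj \<theta> u w \<and> \<theta> w v \<noteq> 1 \<and> adj \<theta> w z)}"

lemma third_candidates_emptyI:
  assumes "\<And>w z. w \<in> V \<Longrightarrow> z \<in> V \<Longrightarrow> adj \<theta> u w \<Longrightarrow> \<theta> w v \<noteq> 1 \<Longrightarrow> adj \<theta> w z \<Longrightarrow>
      z \<noteq> u \<Longrightarrow> z \<noteq> v \<Longrightarrow> \<theta> z u \<noteq> 1 \<Longrightarrow> False"
  shows "third_candidates V \<theta> u v = {}"
  using assms unfolding third_candidates_def by blast

lemma third_candidates_subsetI:
  assumes "\<And>w z. w \<in> V \<Longrightarrow> z \<in> V \<Longrightarrow> adj \<theta> u w \<Longrightarrow> \<theta> w v \<noteq> 1 \<Longrightarrow> adj \<theta> w z \<Longrightarrow>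
      z \<noteq> u \<Longrightarrow> z \<noteq> v \<Longrightarrow> \<theta> z u \<noteq> 1 \<Longrightarrow> z = c"
  shows "third_candidates V \<theta> u v \<subseteq> {c}"
  using assms unfolding third_candidates_def by blast

lemma is_path_adj: "is_path V \<theta> ps \<Longrightarrow> i + 1 < length ps \<Longrightarrow> adj \<theta> (ps ! i) (ps ! (i + 1))"
  unfolding is_path_def by auto

lemma is_path_antiadj:
  "is_path V \<theta> ps \<Longrightarrow> j < length ps \<Longrightarrow> i + 1 < j \<Longrightarrow> antiadj \<theta> (ps ! i) (ps ! j)"
  unfolding is_path_def by auto

lemma is_path_rev:
  assumes "is_path V \<theta> ps"
  shows "is_path V \<theta> (rev ps)"
proof -
  have "(i + 1 = j \<or> j + 1 = i \<longrightarrow> adj \<theta> (rev ps ! i) (rev ps ! j)) \<and>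
        (i + 1 < j \<or> j + 1 < i \<longrightarrow> antiadj \<theta> (rev ps ! i) (rev ps ! j))"
    if ij: "i < length ps" "j < length ps" for i j
  proof -
    let ?i = "length ps - Suc i" and ?j = "length ps - Suc j"
    have "(i + 1 = j \<or> j + 1 = i) = (?i + 1 = ?j \<or> ?j + 1 = ?i)"
      "(i + 1 < j \<or> j + 1 < i) = (?i + 1 < ?j \<or> ?j + 1 < ?i)"
      using ij by auto
    moreover have "?i < length ps" "?j < length ps" using ij by auto
    ultimately show ?thesis using assms ij unfolding is_path_def by (simp add: rev_nth)
  qed
  then show ?thesis using assms unfolding is_path_def by simp
qed

lemma third_vertex_in_third_candidates:
  assumes tg: "trigraph V \<theta>" and p: "is_path V \<theta> ps"
    and ends: "hd ps = u" "last ps = v" and long: "length ps \<ge> 4"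
  shows "ps ! 2 \<in> third_candidates V \<theta> u v"
proof -
  have u: "ps ! 0 = u" and v: "ps ! (length ps - 1) = v"
    using p ends unfolding is_path_def by (auto simp: hd_conv_nth last_conv_nth)
  have in_V: "ps ! i \<in> V" if "i < length ps" for i
    using p that unfolding is_path_def by auto
  have "adj \<theta> u (ps ! 1)" "adj \<theta> (ps ! 1) (ps ! 2)"
    using is_path_adj[OF p, of 0] is_path_adj[OF p, of 1] long u by (auto simp: numeral_2_eq_2)
  moreover have "antiadj \<theta> (ps ! 1) v" "antiadj \<theta> u (ps ! 2)"
    using is_path_antiadj[OF p, of "length ps - 1" 1] is_path_antiadj[OF p, of 2 0] long u v by auto
  moreover have ne: "ps ! 2 \<noteq> u" "ps ! 2 \<noteq> v"
    using p long u v nth_eq_iff_index_eq[of ps 2 0] nth_eq_iff_index_eq[of ps 2 "length ps - 1"]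
    unfolding is_path_def by auto
  moreover have "u \<in> V" "ps ! 2 \<in> V" using in_V[of 0] in_V[of 2] long u by force+
  then have "\<theta> (ps ! 2) u = \<theta> u (ps ! 2)"
    using tg ne unfolding trigraph_def by blast
  ultimately show ?thesis
    using in_V[of 1] in_V[of 2] long unfolding third_candidates_def antiadj_def by auto
qed

lemma odd_path_length_ge_4:
  assumes p: "is_path V \<theta> ps" and ends: "hd ps = u" "last ps = v"
    and uv: "\<theta> u v = -1" and odd: "odd (length ps - 1)"
  shows "length ps \<ge> 4"
proof -
  have "length ps \<noteq> 2"
  proof
    assume "length ps = 2"
    then have "ps = [u, v]"
      using ends by (cases ps rule: remdups_adj.cases) auto
    then show False using is_path_adj[OF p, of 0] uv unfolding adj_def by simp
  qed
  moreover have "ps \<noteq> []" using p unfolding is_path_def by simp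
  ultimately show ?thesis using odd by (cases "length ps") (auto, presburger)
qed

lemma even_pair_if_no_third_candidate:
  assumes tg: "trigraph V \<theta>" and uv: "u \<in> V" "v \<in> V" "u \<noteq> v" "\<theta> u v = -1"
    and empty: "third_candidates V \<theta> u v = {}"
  shows "even_pair V \<theta> u v"
  unfolding even_pair_def
  using uv odd_path_length_ge_4[of V \<theta> _ u v] third_vertex_in_third_candidates[OF tg, of _ u v] empty
  by blast

lemma even_pair_if_common_third_candidate:
  assumes tg: "trigraph V \<theta>" and uv: "u \<in> V" "v \<in> V" "u \<noteq> v" "\<theta> u v = -1"
    and common: "third_candidates V \<theta> u v \<subseteq> {c}" "third_candidates V \<theta> v u \<subseteq> {c}"
  shows "even_pair V \<theta> u v"
  unfolding even_pair_def
proof (intro conjI allI impI)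
  fix ps assume ps: "is_path V \<theta> ps \<and> hd ps = u \<and> last ps = v"
  show "even (length ps - 1)"
  proof (rule ccontr)
    assume odd: "odd (length ps - 1)"
    then have long: "length ps \<ge> 4" using ps uv(4) odd_path_length_ge_4[of V \<theta> ps u v] by simp
    have "rev ps ! 2 \<in> third_candidates V \<theta> v u"
      using third_vertex_in_third_candidates[OF tg is_path_rev] ps long
      by (simp add: hd_rev last_rev)
    then have "ps ! (length ps - 3) = c" using common(2) long by (auto simp: rev_nth numeral_eq_Suc)
    moreover have "ps ! 2 = c"
      using third_vertex_in_third_candidates[OF tg] ps long common(1) by blast
    ultimately have "length ps - 3 = 2"
      using ps long nth_eq_iff_index_eq unfolding is_path_def by fastforce
    then have "length ps = 5" using long by linarith
    then show False using odd by simp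
  qed
qed (use uv in auto)

lemma adj_neq: "adj \<theta> u v \<Longrightarrow> u \<noteq> v"
  unfolding adj_def by simp

lemma strong_antiadj_not_adj: "\<theta> u v = -1 \<Longrightarrow> \<not> adj \<theta> u v"
  unfolding adj_def by simp

lemma strong_adj_adj: "\<theta> u v = 1 \<Longrightarrow> u \<noteq> v \<Longrightarrow> adj \<theta> u v"
  unfolding adj_def by simp

lemma rtrancl_closed:
  assumes "(p, z) \<in> R\<^sup>*" "\<And>a b. a \<in> S \<Longrightarrow> (a, b) \<in> R \<Longrightarrow> b \<in> S" "p \<in> S"
  shows "z \<in> S"
  using assms(1) by (induction rule: rtrancl_induct) (use assms in auto)

lemma sw_D_iff:
  assumes tg: "trigraph V \<theta>"
  shows "u \<in> sw_D V \<theta> \<longleftrightarrow> u \<in> V \<and> (\<exists>w\<in>V. w \<noteq> u \<and> \<theta> u w = 0)"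
proof
  assume "u \<in> sw_D V \<theta>"
  then obtain v where v: "v \<in> V" and vu: "(v, u) \<in> (sw_rel V \<theta>)\<^sup>*"
    and two: "card {z. (v, z) \<in> (sw_rel V \<theta>)\<^sup>*} \<ge> 2"
    unfolding sw_D_def sw_components_def by blast
  obtain w where "(u, w) \<in> sw_rel V \<theta> \<or> (w, u) \<in> sw_rel V \<theta>"
  proof (cases "u = v")
    case True
    have "\<not> {z. (v, z) \<in> (sw_rel V \<theta>)\<^sup>*} \<subseteq> {v}"
      using two card_mono[of "{v}" "{z. (v, z) \<in> (sw_rel V \<theta>)\<^sup>*}"] by auto
    then obtain z where "(v, z) \<in> (sw_rel V \<theta>)\<^sup>*" "z \<noteq> v" by blast
    then show ?thesis using that True by (metis converse_rtranclE)
  next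
    case False
    then show ?thesis using that vu by (metis rtranclE)
  qed
  then show "u \<in> V \<and> (\<exists>w\<in>V. w \<noteq> u \<and> \<theta> u w = 0)"
    using tg unfolding sw_rel_def trigraph_def by auto
next
  assume "u \<in> V \<and> (\<exists>w\<in>V. w \<noteq> u \<and> \<theta> u w = 0)"
  then obtain w where u: "u \<in> V" and w: "w \<in> V" "w \<noteq> u" "\<theta> u w = 0" by blast
  let ?C = "{z. (u, z) \<in> (sw_rel V \<theta>)\<^sup>*}"
  have "?C \<subseteq> V"
    using rtrancl_closed[of u _ "sw_rel V \<theta>" V] u unfolding sw_rel_def by blast
  then have "finite ?C" using tg finite_subset unfolding trigraph_def by blast
  moreover have "{u, w} \<subseteq> ?C" using u w unfolding sw_rel_def by auto
  ultimately have "card ?C \<ge> 2" using card_mono[of ?C "{u, w}"] w by simp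
  then show "u \<in> sw_D V \<theta>" unfolding sw_D_def sw_components_def using u by blast
qed

definition comp_of :: "'a set \<Rightarrow> ('a \<Rightarrow> 'a \<Rightarrow> bool) \<Rightarrow> 'a \<Rightarrow> 'a set" where
  "comp_of S R x = {u \<in> S. (x, u) \<in> {(a, b). a \<in> S \<and> b \<in> S \<and> R a b}\<^sup>*}"

lemma card_le_2_third_eq:
  assumes "finite C" "card C \<le> 2" "{x, w, w'} \<subseteq> C" "x \<noteq> w" "x \<noteq> w'"
  shows "w = w'"
proof (rule ccontr)
  assume "w \<noteq> w'"
  then have "card {x, w, w'} = 3" using assms(4,5) by simp
  then show False using card_mono[OF assms(1,3)] assms(2) by linarith
qed

lemma comp_of_in_comps_of: "x \<in> S \<Longrightarrow> comp_of S R x \<in> comps_of S R"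
  unfolding comp_of_def comps_of_def by blast

lemma comp_of_self: "x \<in> S \<Longrightarrow> x \<in> comp_of S R x"
  unfolding comp_of_def by auto

lemma comp_of_step: "x \<in> S \<Longrightarrow> w \<in> S \<Longrightarrow> R x w \<Longrightarrow> w \<in> comp_of S R x"
  unfolding comp_of_def by auto

lemma comps_of_subset: "C \<in> comps_of S R \<Longrightarrow> C \<subseteq> S"
  unfolding comps_of_def by auto

lemma all_less_6: "(\<forall>i<(6::nat). P i) = (P 0 \<and> P 1 \<and> P 2 \<and> P 3 \<and> P 4 \<and> P 5)"
proof
  assume "\<forall>i<(6::nat). P i" then show "P 0 \<and> P 1 \<and> P 2 \<and> P 3 \<and> P 4 \<and> P 5" by simp
next
  assume "P 0 \<and> P 1 \<and> P 2 \<and> P 3 \<and> P 4 \<and> P 5"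
  moreover have "i < 6 \<Longrightarrow> i = 0 \<or> i = 1 \<or> i = 2 \<or> i = 3 \<or> i = 4 \<or> i = 5" for i :: nat by arith
  ultimately show "\<forall>i<(6::nat). P i" by auto
qed

lemma is_hole6I:
  fixes \<rho> :: "'a \<Rightarrow> 'a \<Rightarrow> int"
  assumes d: "distinct [h0, h1, h2, h3, h4, h5]" and s: "set [h0, h1, h2, h3, h4, h5] \<subseteq> V"
    and sym: "\<And>u v. u \<in> V \<Longrightarrow> v \<in> V \<Longrightarrow> \<rho> u v = \<rho> v u"
    and a: "adj \<rho> h0 h1" "adj \<rho> h1 h2" "adj \<rho> h2 h3" "adj \<rho> h3 h4" "adj \<rho> h4 h5" "adj \<rho> h5 h0"
    and b: "antiadj \<rho> h0 h2" "antiadj \<rho> h0 h3" "antiadj \<rho> h0 h4" "antiadj \<rho> h1 h3"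
      "antiadj \<rho> h1 h4" "antiadj \<rho> h1 h5" "antiadj \<rho> h2 h4" "antiadj \<rho> h2 h5" "antiadj \<rho> h3 h5"
  shows "is_hole V \<rho> [h0, h1, h2, h3, h4, h5]"
proof -
  have sa: "adj \<rho> v u" if "adj \<rho> u v" "u \<in> V" "v \<in> V" for u v
    using that sym[of u v] unfolding adj_def by auto
  have sb: "antiadj \<rho> v u" if "antiadj \<rho> u v" "u \<in> V" "v \<in> V" for u v
    using that sym[of u v] unfolding antiadj_def by auto
  have "adj \<rho> h1 h0" "adj \<rho> h2 h1" "adj \<rho> h3 h2" "adj \<rho> h4 h3" "adj \<rho> h5 h4" "adj \<rho> h0 h5"
    "antiadj \<rho> h2 h0" "antiadj \<rho> h3 h0" "antiadj \<rho> h4 h0" "antiadj \<rho> h3 h1"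
    "antiadj \<rho> h4 h1" "antiadj \<rho> h5 h1" "antiadj \<rho> h4 h2" "antiadj \<rho> h5 h2" "antiadj \<rho> h5 h3"
    using a b s sa sb by auto
  moreover have "length [h0, h1, h2, h3, h4, h5] = 6" by simp
  ultimately show ?thesis
    unfolding is_hole_def using d s a b by (simp only: all_less_6) simp
qed

lemma adj_uminus: "adj (\<lambda>u v. - \<theta> u v) u v = antiadj \<theta> u v"
  and antiadj_uminus: "antiadj (\<lambda>u v. - \<theta> u v) u v = adj \<theta> u v"
  unfolding adj_def antiadj_def by auto

lemma is_antihole6I:
  assumes d: "distinct [h0, h1, h2, h3, h4, h5]" and s: "set [h0, h1, h2, h3, h4, h5] \<subseteq> V"
    and sym: "\<And>u v. u \<in> V \<Longrightarrow> v \<in> V \<Longrightarrow> \<theta> u v = \<theta> v u"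
    and "antiadj \<theta> h0 h1" "antiadj \<theta> h1 h2" "antiadj \<theta> h2 h3" "antiadj \<theta> h3 h4"
      "antiadj \<theta> h4 h5" "antiadj \<theta> h5 h0"
    and "adj \<theta> h0 h2" "adj \<theta> h0 h3" "adj \<theta> h0 h4" "adj \<theta> h1 h3"
      "adj \<theta> h1 h4" "adj \<theta> h1 h5" "adj \<theta> h2 h4" "adj \<theta> h2 h5" "adj \<theta> h3 h5"
  shows "is_antihole V \<theta> [h0, h1, h2, h3, h4, h5]"
  unfolding is_antihole_def
  by (rule is_hole6I[OF d s]) (use assms in \<open>simp_all add: adj_uminus antiadj_uminus\<close>)

locale good_partitioned =
  fixes V :: "'a set" and \<theta> :: "'a \<Rightarrow> 'a \<Rightarrow> int" and X Y :: "'a set"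
  assumes trigraph: "trigraph V \<theta>" and good_partition: "good_partition V \<theta> X Y"
begin

lemma finite_V: "finite V"
  using trigraph unfolding trigraph_def by auto

lemma partition: "X \<union> Y = V" "X \<inter> Y = {}"
  using good_partition unfolding good_partition_def by auto

lemma X_in_V: "x \<in> X \<Longrightarrow> x \<in> V" and Y_in_V: "y \<in> Y \<Longrightarrow> y \<in> V"
  and X_not_in_Y: "x \<in> X \<Longrightarrow> x \<notin> Y" and X_or_Y: "w \<in> V \<Longrightarrow> w \<in> X \<or> w \<in> Y"
  using partition by auto

lemma X_component_card: "C \<in> comps_of X (adj \<theta>) \<Longrightarrow> card C \<le> 2"
  and Y_anticomponent_card: "C \<in> comps_of Y (antiadj \<theta>) \<Longrightarrow> card C \<le> 2"
  and X_Y_not_switchable: "x \<in> X \<Longrightarrow> y \<in> Y \<Longrightarrow> \<theta> x y \<noteq> 0"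
  using good_partition unfolding good_partition_def by simp_all

lemma cross_strong_card:
  assumes "Cx \<in> comps_of X (adj \<theta>)" "Cy \<in> comps_of Y (antiadj \<theta>)" "w \<in> Cx \<union> Cy"
  shows "card {z. ((w \<in> Cx \<and> z \<in> Cy) \<or> (w \<in> Cy \<and> z \<in> Cx)) \<and> \<theta> w z = 1} \<le> 1"
    and "card {z. ((w \<in> Cx \<and> z \<in> Cy) \<or> (w \<in> Cy \<and> z \<in> Cx)) \<and> \<theta> w z = -1} \<le> 1"
proof -
  have "\<forall>Cx\<in>comps_of X (adj \<theta>). \<forall>Cy\<in>comps_of Y (antiadj \<theta>). \<forall>w\<in>Cx \<union> Cy.
        card {z. ((w \<in> Cx \<and> z \<in> Cy) \<or> (w \<in> Cy \<and> z \<in> Cx)) \<and> \<theta> w z = 1} \<le> 1 \<and>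
        card {z. ((w \<in> Cx \<and> z \<in> Cy) \<or> (w \<in> Cy \<and> z \<in> Cx)) \<and> \<theta> w z = -1} \<le> 1"
    using good_partition unfolding good_partition_def by (elim conjE)
  then show "card {z. ((w \<in> Cx \<and> z \<in> Cy) \<or> (w \<in> Cy \<and> z \<in> Cx)) \<and> \<theta> w z = 1} \<le> 1"
    and "card {z. ((w \<in> Cx \<and> z \<in> Cy) \<or> (w \<in> Cy \<and> z \<in> Cx)) \<and> \<theta> w z = -1} \<le> 1"
    using assms by (meson bspec)+
qed

lemma theta_sym: "u \<in> V \<Longrightarrow> v \<in> V \<Longrightarrow> \<theta> u v = \<theta> v u"
  using trigraph unfolding trigraph_def by (cases "u = v") auto

lemma theta_cases: "u \<in> V \<Longrightarrow> v \<in> V \<Longrightarrow> u \<noteq> v \<Longrightarrow> \<theta> u v = -1 \<or> \<theta> u v = 0 \<or> \<theta> u v = 1"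
  using trigraph unfolding trigraph_def by auto

lemma adj_iff: "u \<in> V \<Longrightarrow> v \<in> V \<Longrightarrow> adj \<theta> u v \<longleftrightarrow> u \<noteq> v \<and> \<theta> u v \<noteq> -1"
  using theta_cases[of u v] unfolding adj_def by auto

lemma antiadj_iff: "u \<in> V \<Longrightarrow> v \<in> V \<Longrightarrow> antiadj \<theta> u v \<longleftrightarrow> u \<noteq> v \<and> \<theta> u v \<noteq> 1"
  using theta_cases[of u v] unfolding antiadj_def by auto

lemma adj_commute: "u \<in> V \<Longrightarrow> v \<in> V \<Longrightarrow> adj \<theta> u v \<longleftrightarrow> adj \<theta> v u"
  using theta_sym[of u v] unfolding adj_def by auto

lemma antiadj_commute: "u \<in> V \<Longrightarrow> v \<in> V \<Longrightarrow> antiadj \<theta> u v \<longleftrightarrow> antiadj \<theta> v u"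
  using theta_sym[of u v] unfolding antiadj_def by auto

lemma not_adj_strong_antiadj: "u \<in> V \<Longrightarrow> v \<in> V \<Longrightarrow> u \<noteq> v \<Longrightarrow> \<not> adj \<theta> u v \<Longrightarrow> \<theta> u v = -1"
  using adj_iff by blast

lemma not_antiadj_strong_adj:
  "u \<in> V \<Longrightarrow> v \<in> V \<Longrightarrow> u \<noteq> v \<Longrightarrow> \<not> antiadj \<theta> u v \<Longrightarrow> \<theta> u v = 1"
  using antiadj_iff by blast

lemma antiadjI: "u \<in> V \<Longrightarrow> v \<in> V \<Longrightarrow> u \<noteq> v \<Longrightarrow> \<theta> u v \<noteq> 1 \<Longrightarrow> antiadj \<theta> u v"
  using antiadj_iff by blast

lemma X_neighbour_unique:
  assumes "x \<in> X" "w \<in> X" "w' \<in> X" "adj \<theta> x w" "adj \<theta> x w'"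
  shows "w = w'"
proof -
  have C: "comp_of X (adj \<theta>) x \<in> comps_of X (adj \<theta>)" using comp_of_in_comps_of[OF assms(1)] .
  then have "card (comp_of X (adj \<theta>) x) \<le> 2" by (rule X_component_card)
  moreover have "{x, w, w'} \<subseteq> comp_of X (adj \<theta>) x"
    using comp_of_self[OF assms(1)] comp_of_step[where R="adj \<theta>", OF assms(1,2,4)]
    comp_of_step[where R="adj \<theta>", OF assms(1,3,5)] by blast
  moreover have "finite (comp_of X (adj \<theta>) x)"
    using comps_of_subset[OF C] partition finite_V finite_subset by blast
  ultimately show ?thesis
    using card_le_2_third_eq[of _ x w w'] adj_neq[OF assms(4)] adj_neq[OF assms(5)] by blast
qed

lemma Y_antineighbour_unique:
  assumes "y \<in> Y" "w \<in> Y" "w' \<in> Y" "antiadj \<theta> y w" "antiadj \<theta> y w'"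
  shows "w = w'"
proof -
  have C: "comp_of Y (antiadj \<theta>) y \<in> comps_of Y (antiadj \<theta>)" using comp_of_in_comps_of[OF assms(1)] .
  then have "card (comp_of Y (antiadj \<theta>) y) \<le> 2" by (rule Y_anticomponent_card)
  moreover have "{y, w, w'} \<subseteq> comp_of Y (antiadj \<theta>) y"
    using comp_of_self[OF assms(1)] comp_of_step[where R="antiadj \<theta>", OF assms(1,2,4)]
    comp_of_step[where R="antiadj \<theta>", OF assms(1,3,5)] by blast
  moreover have "finite (comp_of Y (antiadj \<theta>) y)"
    using comps_of_subset[OF C] partition finite_V finite_subset by blast
  ultimately show ?thesis
    using card_le_2_third_eq[of _ y w w'] assms(4,5)[unfolded antiadj_def] by blast
qed

lemma Y_adj_beyond_antineighbour:
  assumes "y \<in> Y" "y' \<in> Y" "antiadj \<theta> y y'" "w \<in> Y" "w \<noteq> y" "w \<noteq> y'"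
  shows "adj \<theta> y w"
  using Y_antineighbour_unique[OF assms(1,2,4,3)] assms Y_in_V antiadj_iff adj_iff by force

lemma X_Y_strong:
  assumes "x \<in> X" "y \<in> Y"
  shows "\<theta> x y = 1 \<or> \<theta> x y = -1"
proof -
  have "\<theta> x y \<noteq> 0" using X_Y_not_switchable assms .
  then show ?thesis using theta_cases[of x y] assms X_in_V Y_in_V X_not_in_Y by blast
qed

lemma Y_X_strong: "x \<in> X \<Longrightarrow> y \<in> Y \<Longrightarrow> \<theta> y x = 1 \<or> \<theta> y x = -1"
  using X_Y_strong theta_sym X_in_V Y_in_V X_not_in_Y by metis

lemma Y_X_not_switchable: "x \<in> X \<Longrightarrow> y \<in> Y \<Longrightarrow> \<theta> y x \<noteq> 0"
  using Y_X_strong by force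

lemma X_Y_adj_strong: "x \<in> X \<Longrightarrow> y \<in> Y \<Longrightarrow> adj \<theta> x y \<Longrightarrow> \<theta> x y = 1"
  and Y_X_adj_strong: "x \<in> X \<Longrightarrow> y \<in> Y \<Longrightarrow> adj \<theta> y x \<Longrightarrow> \<theta> y x = 1"
  using X_Y_strong[of x y] Y_X_strong[of x y] unfolding adj_def by auto

lemma cross_value_unique:
  assumes C: "Cx \<in> comps_of X (adj \<theta>)" "Cy \<in> comps_of Y (antiadj \<theta>)"
    and w: "(w \<in> Cx \<and> z \<in> Cy \<and> z' \<in> Cy) \<or> (w \<in> Cy \<and> z \<in> Cx \<and> z' \<in> Cx)"
    and c: "\<theta> w z = c" "\<theta> w z' = c" "c = 1 \<or> c = -1"
  shows "z = z'"
proof -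
  let ?S = "{z. ((w \<in> Cx \<and> z \<in> Cy) \<or> (w \<in> Cy \<and> z \<in> Cx)) \<and> \<theta> w z = c}"
  have "Cx \<union> Cy \<subseteq> V" using C comps_of_subset partition by blast
  then have "finite ?S" using finite_V by (rule_tac finite_subset[of _ V]) auto
  moreover have "card ?S \<le> 1" using cross_strong_card[OF C] w c(3) by blast
  ultimately show ?thesis using w c card_le_Suc0_iff_eq[of ?S] by auto
qed

lemma X_vertex_splits_antiedge:
  assumes "x \<in> X" "y \<in> Y" "y' \<in> Y" "antiadj \<theta> y y'"
  shows "(\<theta> x y = 1 \<and> \<theta> x y' = -1) \<or> (\<theta> x y = -1 \<and> \<theta> x y' = 1)"
proof -
  have "y' \<in> comp_of Y (antiadj \<theta>) y" using comp_of_step[where R="antiadj \<theta>", OF assms(2,3,4)] .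
  then have "y = y'" if "\<theta> x y = \<theta> x y'"
    using cross_value_unique[OF comp_of_in_comps_of[OF assms(1)] comp_of_in_comps_of[OF assms(2)],
        of x y y' "\<theta> x y"] that[symmetric] comp_of_self[where R="adj \<theta>", OF assms(1)]
      comp_of_self[where R="antiadj \<theta>", OF assms(2)]
      X_Y_strong[OF assms(1,2)] by blast
  moreover have "y \<noteq> y'" using assms(4) unfolding antiadj_def by simp
  ultimately show ?thesis using X_Y_strong[OF assms(1,2)] X_Y_strong[OF assms(1,3)] by auto
qed

lemma Y_vertex_splits_edge:
  assumes "y \<in> Y" "x \<in> X" "x' \<in> X" "adj \<theta> x x'"
  shows "(\<theta> y x = 1 \<and> \<theta> y x' = -1) \<or> (\<theta> y x = -1 \<and> \<theta> y x' = 1)"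
proof -
  have "x' \<in> comp_of X (adj \<theta>) x" using comp_of_step[where R="adj \<theta>", OF assms(2,3,4)] .
  then have "x = x'" if "\<theta> y x = \<theta> y x'"
    using cross_value_unique[OF comp_of_in_comps_of[OF assms(2)] comp_of_in_comps_of[OF assms(1)],
        of y x x' "\<theta> y x"] that[symmetric] comp_of_self[where R="antiadj \<theta>", OF assms(1)]
      comp_of_self[where R="adj \<theta>", OF assms(2)]
      Y_X_strong[OF assms(2,1)] by blast
  moreover have "x \<noteq> x'" using assms(4) unfolding adj_def by simp
  ultimately show ?thesis using Y_X_strong[OF assms(2,1)] Y_X_strong[OF assms(3,1)] by auto
qed

lemma switchable_partner_unique:
  assumes "p \<in> V" "w \<in> V" "w' \<in> V" "w \<noteq> p" "w' \<noteq> p" "\<theta> p w = 0" "\<theta> p w' = 0"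
  shows "w = w'"
proof (cases "p \<in> X")
  case True
  have "w \<in> X" using assms(2,6) X_Y_not_switchable[OF True] partition by blast
  moreover have "w' \<in> X" using assms(3,7) X_Y_not_switchable[OF True] partition by blast
  ultimately show ?thesis using X_neighbour_unique[OF True] assms unfolding adj_def by auto
next
  case False
  then have pY: "p \<in> Y" using assms(1) partition by blast
  have "w \<in> Y" using assms(2,6) Y_X_not_switchable[OF _ pY] partition by blast
  moreover have "w' \<in> Y" using assms(3,7) Y_X_not_switchable[OF _ pY] partition by blast
  ultimately show ?thesis using Y_antineighbour_unique[OF pY] assms unfolding antiadj_def by auto
qed

lemma sw_component_of_pair:
  assumes "p \<in> V" "q \<in> V" "p \<noteq> q" "\<theta> p q = 0"
  shows "{z. (p, z) \<in> (sw_rel V \<theta>)\<^sup>*} = {p, q}"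
proof
  have qp: "\<theta> q p = 0" using theta_sym assms by metis
  show "{z. (p, z) \<in> (sw_rel V \<theta>)\<^sup>*} \<subseteq> {p, q}"
  proof
    fix z assume "z \<in> {z. (p, z) \<in> (sw_rel V \<theta>)\<^sup>*}"
    then have pz: "(p, z) \<in> (sw_rel V \<theta>)\<^sup>*" by simp
    show "z \<in> {p, q}"
    proof (rule rtrancl_closed[OF pz])
      fix a b assume a: "a \<in> {p, q}" and ab: "(a, b) \<in> sw_rel V \<theta>"
      then have b: "b \<in> V" "b \<noteq> a" "\<theta> a b = 0" "a \<in> V" unfolding sw_rel_def by auto
      show "b \<in> {p, q}"
      proof (cases "a = p")
        case True then show ?thesis using switchable_partner_unique[of p b q] b assms by auto
      next
        case False then have "a = q" using a by auto
        then show ?thesis using switchable_partner_unique[of q b p] b assms qp by auto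
      qed
    qed simp
  qed
  have "(p, q) \<in> sw_rel V \<theta>" using assms unfolding sw_rel_def by auto
  then show "{p, q} \<subseteq> {z. (p, z) \<in> (sw_rel V \<theta>)\<^sup>*}" by auto
qed

lemma sw_pair_in_components:
  assumes "p \<in> V" "q \<in> V" "p \<noteq> q" "\<theta> p q = 0"
  shows "{p, q} \<in> sw_components V \<theta>"
proof -
  have "card {p, q} = 2" using assms(3) by simp
  then show ?thesis unfolding sw_components_def using sw_component_of_pair[OF assms] assms(1)
    by (intro CollectI bexI[of _ p]) auto
qed

lemma antihole6_of_oriented_antiedges:
  assumes a: "a \<in> X" "b \<in> X" "adj \<theta> a b"
    and y: "y1 \<in> Y" "y1' \<in> Y" "y2 \<in> Y" "y2' \<in> Y" "antiadj \<theta> y1 y1'" "antiadj \<theta> y2 y2'"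
    and d: "y2 \<noteq> y1" "y2 \<noteq> y1'" "y2' \<noteq> y1" "y2' \<noteq> y1'"
    and o: "\<theta> a y1 = 1" "\<theta> a y2 = 1"
  shows "is_antihole V \<theta> [a, y1', y1, b, y2, y2']"
proof -
  have V: "a \<in> V" "b \<in> V" "y1 \<in> V" "y1' \<in> V" "y2 \<in> V" "y2' \<in> V" using a y partition by auto
  have ne: "a \<noteq> b" "y1 \<noteq> y1'" "y2 \<noteq> y2'" using a(3) y(5,6) unfolding adj_def antiadj_def by auto
  have o': "\<theta> a y1' = -1" "\<theta> a y2' = -1"
    using X_vertex_splits_antiedge[OF a(1) y(1,2,5)] X_vertex_splits_antiedge[OF a(1) y(3,4,6)] o by auto
  have "\<theta> y1 b = -1" "\<theta> y2 b = -1"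
    using Y_vertex_splits_edge[OF y(1) a] Y_vertex_splits_edge[OF y(3) a] o theta_sym V by auto
  then have b: "\<theta> b y1 = -1" "\<theta> b y2 = -1" "\<theta> b y1' = 1" "\<theta> b y2' = 1"
    using X_vertex_splits_antiedge[OF a(2) y(1,2,5)] X_vertex_splits_antiedge[OF a(2) y(3,4,6)]
      theta_sym V by auto
  have yy: "adj \<theta> y1 y2" "adj \<theta> y1 y2'" "adj \<theta> y1' y2" "adj \<theta> y1' y2'"
    using Y_adj_beyond_antineighbour[OF y(1,2,5)] Y_adj_beyond_antineighbour[OF y(2,1)] y d
      antiadj_commute V by auto
  have "distinct [a, y1', y1, b, y2, y2']" using d ne a y X_not_in_Y by auto
  moreover have "set [a, y1', y1, b, y2, y2'] \<subseteq> V" using V by auto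
  ultimately show ?thesis
    using o o' b yy y(5,6) a(3) ne d V antiadj_commute theta_sym
    by (intro is_antihole6I) (auto simp: adj_def antiadj_def)
qed

lemma X_vertex_strong_end:
  assumes "x \<in> X" "y \<in> Y" "y' \<in> Y" "antiadj \<theta> y y'"
  obtains p p' where "{p, p'} = {y, y'}" "p \<in> Y" "p' \<in> Y" "antiadj \<theta> p p'" "\<theta> x p = 1"
proof (cases "\<theta> x y = 1")
  case True
  then show ?thesis using that assms by blast
next
  case False
  then have "\<theta> x y' = 1" using X_vertex_splits_antiedge[OF assms] by auto
  moreover have "antiadj \<theta> y' y" using assms antiadj_commute Y_in_V by blast
  ultimately show ?thesis using that assms by (metis insert_commute)
qed

lemma antihole6_of_edge_and_antiedges:
  assumes a: "a \<in> X" "b \<in> X" "adj \<theta> a b"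
    and y: "y1 \<in> Y" "y1' \<in> Y" "y2 \<in> Y" "y2' \<in> Y" "antiadj \<theta> y1 y1'" "antiadj \<theta> y2 y2'"
    and d: "y2 \<noteq> y1" "y2 \<noteq> y1'" "y2' \<noteq> y1" "y2' \<noteq> y1'"
  shows "\<exists>hs. is_antihole V \<theta> hs \<and> length hs = 6"
proof -
  obtain p1 p1' where p1: "{p1, p1'} = {y1, y1'}" "p1 \<in> Y" "p1' \<in> Y" "antiadj \<theta> p1 p1'" "\<theta> a p1 = 1"
    using X_vertex_strong_end[OF a(1) y(1,2,5)] .
  obtain p2 p2' where p2: "{p2, p2'} = {y2, y2'}" "p2 \<in> Y" "p2' \<in> Y" "antiadj \<theta> p2 p2'" "\<theta> a p2 = 1"
    using X_vertex_strong_end[OF a(1) y(3,4,6)] .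
  have "p2 \<noteq> p1" "p2 \<noteq> p1'" "p2' \<noteq> p1" "p2' \<noteq> p1'"
    using p1(1) p2(1) d by (metis doubleton_eq_iff)+
  then show ?thesis
    using antihole6_of_oriented_antiedges[OF a p1(2,3) p2(2,3) p1(4) p2(4)] p1(5) p2(5) by fastforce
qed

lemma even_pair_X_Y_universal:
  assumes x: "x \<in> X" and s: "s \<in> Y" and s_universal: "\<forall>w\<in>Y. w \<noteq> s \<longrightarrow> \<theta> w s = 1" and xs: "\<theta> x s = -1"
  shows "even_pair V \<theta> x s"
proof (rule even_pair_if_no_third_candidate[OF trigraph])
  show xV: "x \<in> V" "s \<in> V" "x \<noteq> s" "\<theta> x s = -1" using x s xs X_in_V Y_in_V X_not_in_Y by auto
  show "third_candidates V \<theta> x s = {}"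
  proof (rule third_candidates_emptyI)
    fix w z assume w: "w \<in> V" "adj \<theta> x w" "\<theta> w s \<noteq> 1"
    show False
    proof (cases "w \<in> X")
      case True
      have "\<theta> s x = -1" using theta_sym[of s x] xV xs by simp
      then have "\<theta> s w = 1" using Y_vertex_splits_edge[OF s x True w(2)] by auto
      then show False using theta_sym[of w s] w True s X_not_in_Y Y_in_V by auto
    next
      case False
      then have wY: "w \<in> Y" using X_or_Y w(1) by blast
      have "w \<noteq> s" using w(2) xs strong_antiadj_not_adj[of \<theta>] by blast
      then show False using s_universal wY w(3) by blast
    qed
  qed
qed

lemma even_pair_Y_antiedge_X_stable:
  assumes y: "y \<in> Y" "y' \<in> Y" "\<theta> y y' = -1" and yy: "y \<noteq> y'"
    and X_stable: "\<forall>a\<in>X. \<forall>b\<in>X. \<not> adj \<theta> a b"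
  shows "even_pair V \<theta> y y'"
proof (rule even_pair_if_no_third_candidate[OF trigraph])
  show V: "y \<in> V" "y' \<in> V" "y \<noteq> y'" "\<theta> y y' = -1" using y yy Y_in_V by auto
  have ayy: "antiadj \<theta> y y'" using y(3) yy unfolding antiadj_def by simp
  show "third_candidates V \<theta> y y' = {}"
  proof (rule third_candidates_emptyI)
    fix w z assume w: "w \<in> V" "z \<in> V" "adj \<theta> y w" "\<theta> w y' \<noteq> 1" "adj \<theta> w z" "z \<noteq> y"
      "z \<noteq> y'" "\<theta> z y \<noteq> 1"
    show False
    proof (cases "w \<in> Y")
      case True
      have wy': "w \<noteq> y'" using w(3) y(3) strong_antiadj_not_adj[of \<theta>] by blast
      have "antiadj \<theta> y' w" using antiadjI[of w y'] w(1,4) wy' V antiadj_commute by blast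
      then have "w = y"
        using Y_antineighbour_unique[OF y(2) True y(1) _ ] antiadj_commute[of y y'] ayy V by blast
      then show False using w(3) adj_neq[of \<theta>] by blast
    next
      case False
      then have wX: "w \<in> X" using X_or_Y w(1) by blast
      show False
      proof (cases "z \<in> X")
        case True then show False using X_stable wX w(5) by blast
      next
        case False
        then have zY: "z \<in> Y" using X_or_Y w(2) by blast
        have "\<theta> y z \<noteq> 1" using theta_sym[of y z] w(2,6,8) V by simp
        then have "antiadj \<theta> y z" using antiadjI[of y z] w(2,6) V by auto
        then show False using Y_antineighbour_unique[OF y(1) zY y(2) _ ayy] w(7) by blast
      qed
    qed
  qed
qed

lemma even_pair_in_X:
  assumes u: "u \<in> X" "v \<in> X" "u \<noteq> v" "\<theta> u v = -1"
    and u_Y_neighbours: "\<forall>w\<in>Y. adj \<theta> u w \<longrightarrow> \<theta> w v = 1"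
    and u_X_neighbour: "\<forall>u'\<in>X. adj \<theta> u u' \<longrightarrow> (\<forall>z\<in>Y. adj \<theta> u' z \<longrightarrow> \<theta> z u = 1)"
  shows "even_pair V \<theta> u v"
proof (rule even_pair_if_no_third_candidate[OF trigraph])
  show V: "u \<in> V" "v \<in> V" "u \<noteq> v" "\<theta> u v = -1" using u X_in_V by auto
  show "third_candidates V \<theta> u v = {}"
  proof (rule third_candidates_emptyI)
    fix w z assume w: "w \<in> V" "z \<in> V" "adj \<theta> u w" "\<theta> w v \<noteq> 1" "adj \<theta> w z" "z \<noteq> u"
      "z \<noteq> v" "\<theta> z u \<noteq> 1"
    have wX: "w \<in> X" using u_Y_neighbours w(1,3,4) X_or_Y by blast
    show False
    proof (cases "z \<in> X")
      case True
      have "adj \<theta> w u" using adj_commute[of u w] w(1,3) V by simp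
      then show False using X_neighbour_unique[OF wX _ True] u(1) w(5,6) by blast
    next
      case False
      then have "z \<in> Y" using X_or_Y w(2) by blast
      then show False using u_X_neighbour wX w(3,5,8) by blast
    qed
  qed
qed

lemma third_candidates_common_Y_neighbour:
  assumes u: "u \<in> X" "v \<in> X" "u \<noteq> v" "\<not> adj \<theta> u v"
    and y: "y \<in> Y" "y' \<in> Y" "antiadj \<theta> y y'" "\<theta> u y = 1" "\<theta> v y = 1"
    and others: "\<forall>w\<in>Y. w \<noteq> y \<longrightarrow> w \<noteq> y' \<longrightarrow> \<theta> w u = 1 \<and> \<theta> w v = 1"
  shows "third_candidates V \<theta> u v \<subseteq> {y'}"
proof (rule third_candidates_subsetI)
  fix w z assume w: "w \<in> V" "z \<in> V" "adj \<theta> u w" "\<theta> w v \<noteq> 1" "adj \<theta> w z" "z \<noteq> u" "z \<noteq> v"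
    "\<theta> z u \<noteq> 1"
  have V: "u \<in> V" "v \<in> V" "y \<in> V" using u y X_in_V Y_in_V by auto
  have y_uv: "\<theta> y u = 1" "\<theta> y v = 1" using y(4,5) theta_sym V by auto
  have w_X: "w \<in> X"
  proof (rule ccontr)
    assume "w \<notin> X"
    moreover have "w \<noteq> y" using w(4) y_uv by auto
    moreover have "w \<noteq> y'"
      using w(3) X_vertex_splits_antiedge[OF u(1) y(1,2,3)] y(4) strong_antiadj_not_adj[of \<theta>] by auto
    ultimately show False using others X_or_Y w(1,4) by blast
  qed
  show "z = y'"
  proof (cases "z \<in> X")
    case True
    have "adj \<theta> w u" using adj_commute[of u w] w(1,3) V by simp
    then show ?thesis using X_neighbour_unique[OF w_X _ True] u(1) w(5,6) by blast
  next
    case False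
    moreover have "z \<noteq> y" using w(8) y_uv by auto
    ultimately show ?thesis using others X_or_Y w(2,8) by blast
  qed
qed

lemma even_pair_in_X_common_Y_neighbour:
  assumes u: "u \<in> X" "v \<in> X" "u \<noteq> v" "\<not> adj \<theta> u v"
    and y: "y \<in> Y" "y' \<in> Y" "antiadj \<theta> y y'" "\<theta> u y = 1" "\<theta> v y = 1"
    and others: "\<forall>w\<in>Y. w \<noteq> y \<longrightarrow> w \<noteq> y' \<longrightarrow> \<theta> w u = 1 \<and> \<theta> w v = 1"
  shows "even_pair V \<theta> u v"
proof (rule even_pair_if_common_third_candidate[OF trigraph])
  show V: "u \<in> V" "v \<in> V" "u \<noteq> v" using u X_in_V by auto
  show "\<theta> u v = -1" using not_adj_strong_antiadj V u(4) by blast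
  have vu: "\<not> adj \<theta> v u" using adj_commute V u(4) by blast
  show "third_candidates V \<theta> u v \<subseteq> {y'}"
    by (rule third_candidates_common_Y_neighbour[OF u y others])
  show "third_candidates V \<theta> v u \<subseteq> {y'}"
    using others by (intro third_candidates_common_Y_neighbour[OF u(2,1) u(3)[symmetric] vu y(1,2,3,5,4)])
      blast
qed

lemma even_pair_on_four_vertices:
  assumes a: "a \<in> X" "b \<in> X" "adj \<theta> a b" and Xe: "X = {a, b}"
    and y: "y \<in> Y" "y' \<in> Y" "antiadj \<theta> y y'" and Ye: "Y = {y, y'}" and ay: "\<theta> a y = 1"
  shows "even_pair V \<theta> a y'"
proof (rule even_pair_if_no_third_candidate[OF trigraph])
  have ay': "\<theta> a y' = -1" using X_vertex_splits_antiedge[OF a(1) y(1,2,3)] ay by auto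
  show V: "a \<in> V" "y' \<in> V" "a \<noteq> y'" "\<theta> a y' = -1" using a y X_in_V Y_in_V X_not_in_Y ay' by auto
  have yV: "y \<in> V" "b \<in> V" using y a X_in_V Y_in_V by auto
  have ya: "\<theta> y a = 1" using theta_sym[of y a] V yV ay a y X_not_in_Y by auto
  have yb: "\<theta> y b = -1" using Y_vertex_splits_edge[OF y(1) a] ya by auto
  have by': "\<theta> b y' = 1"
  proof -
    have "\<theta> b y = -1" using theta_sym[of b y] yV yb a y X_not_in_Y by auto
    then show ?thesis using X_vertex_splits_antiedge[OF a(2) y(1,2,3)] by auto
  qed
  show "third_candidates V \<theta> a y' = {}"
  proof (rule third_candidates_emptyI)
    fix w z assume w: "w \<in> V" "z \<in> V" "adj \<theta> a w" "\<theta> w y' \<noteq> 1" "adj \<theta> w z" "z \<noteq> a" "z \<noteq> y'" "\<theta> z a \<noteq> 1"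
    have wy: "w = y"
    proof -
      have "w \<noteq> a" using w(3) adj_neq[of \<theta>] by blast
      moreover have "w \<noteq> b" using w(4) by' by blast
      moreover have "w \<noteq> y'" using w(3) ay' strong_antiadj_not_adj[of \<theta>] by blast
      ultimately show ?thesis using w(1) partition Xe Ye by blast
    qed
    have "z \<noteq> y" using w(5) wy adj_neq[of \<theta>] by blast
    moreover have "z \<noteq> b" using w(5) wy yb strong_antiadj_not_adj[of \<theta>] by blast
    ultimately show False using w(2,6,7) partition Xe Ye by blast
  qed
qed

lemma even_pair_X_stable_antiedge_end:
  assumes X_stable: "\<forall>p\<in>X. \<forall>q\<in>X. \<not> adj \<theta> p q"
    and y: "y \<in> Y" "y' \<in> Y" "antiadj \<theta> y y'"
    and others: "\<forall>t\<in>Y. t \<noteq> y \<longrightarrow> t \<noteq> y' \<longrightarrow> (\<forall>w\<in>Y. w \<noteq> t \<longrightarrow> \<theta> w t = 1) \<and> (\<forall>x\<in>X. \<theta> t x = 1)"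
    and x: "x \<in> X" "\<theta> x y' = -1" and no_other: "\<forall>x2\<in>X. x2 \<noteq> x \<longrightarrow> \<theta> x2 y \<noteq> 1"
  shows "even_pair V \<theta> x y'"
proof (rule even_pair_if_no_third_candidate[OF trigraph])
  show V: "x \<in> V" "y' \<in> V" "x \<noteq> y'" "\<theta> x y' = -1" using x y X_in_V Y_in_V X_not_in_Y by auto
  show "third_candidates V \<theta> x y' = {}"
  proof (rule third_candidates_emptyI)
    fix w z assume w: "w \<in> V" "z \<in> V" "adj \<theta> x w" "\<theta> w y' \<noteq> 1" "adj \<theta> w z" "z \<noteq> x" "z \<noteq> y'"
      "\<theta> z x \<noteq> 1"
    have w_Y: "w \<in> Y" using X_stable x(1) w(1,3) X_or_Y by blast
    have "w \<noteq> y'" using w(3) x(2) strong_antiadj_not_adj[of \<theta>] by blast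
    moreover have "\<theta> w y' = 1" if "w \<noteq> y"
      using others w_Y that y(2) \<open>w \<noteq> y'\<close> theta_sym[of w y'] w(1) V(2) by auto
    ultimately have w_y: "w = y" using w(4) by blast
    show False
    proof (cases "z \<in> X")
      case True
      have "\<theta> z y = 1"
        using Y_X_adj_strong[OF True y(1)] w(5) w_y adj_commute theta_sym w(2) Y_in_V[OF y(1)] by metis
      then show False using no_other True w(6) by blast
    next
      case False
      moreover have "z \<noteq> y" using w(5) w_y adj_neq[of \<theta>] by blast
      ultimately show False using others X_or_Y w(2,7,8) x(1) by blast
    qed
  qed
qed

context
  fixes e e' y y' s :: 'a
  assumes edge: "e \<in> X" "e' \<in> X" "adj \<theta> e e'"
    and switchable_only: "\<And>p q. p \<in> V \<Longrightarrow> q \<in> V \<Longrightarrow> p \<noteq> q \<Longrightarrow> \<theta> p q = 0 \<Longrightarrow> {p, q} = {e, e'}"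
    and antiedge: "y \<in> Y" "y' \<in> Y" "\<theta> y y' = -1" "y \<noteq> y'"
    and s: "s \<in> X" "s \<noteq> e" "s \<noteq> e'" "\<theta> s y' = -1"
    and e_y: "\<theta> e y = 1"
    and others: "\<And>t. t \<in> Y \<Longrightarrow> t \<noteq> y \<Longrightarrow> t \<noteq> y' \<Longrightarrow> \<theta> t y' = 1 \<and> \<theta> t s = 1"
    and no_other: "\<And>v. v \<in> X \<Longrightarrow> v \<noteq> e \<Longrightarrow> v \<noteq> e' \<Longrightarrow> v \<noteq> s \<Longrightarrow> \<not> adj \<theta> s v \<Longrightarrow> \<theta> v y \<noteq> 1"
begin

private lemma in_V: "e \<in> V" "e' \<in> V" "y \<in> V" "y' \<in> V" "s \<in> V"
  using edge antiedge s partition by auto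

private lemma signs:
  "\<theta> e' y = -1" "\<theta> e' y' = 1" "\<theta> e y' = -1" "\<theta> y' y = -1" "\<theta> y' s = -1"
proof -
  have "antiadj \<theta> y y'" using antiedge unfolding antiadj_def by simp
  moreover have "\<theta> y e = 1" using e_y theta_sym in_V by simp
  then have "\<theta> y e' = -1" using Y_vertex_splits_edge[OF antiedge(1) edge] by auto
  ultimately show "\<theta> e' y = -1" "\<theta> e' y' = 1" "\<theta> e y' = -1"
    using X_vertex_splits_antiedge[OF edge(2) antiedge(1,2)]
      X_vertex_splits_antiedge[OF edge(1) antiedge(1,2)]
      e_y theta_sym in_V by auto
  show "\<theta> y' y = -1" "\<theta> y' s = -1" using antiedge(3) s(4) theta_sym in_V by auto
qed

private lemma s_adj_strong: "z \<in> V \<Longrightarrow> adj \<theta> s z \<Longrightarrow> \<theta> s z = 1"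
  using switchable_only[of s z] s(2,3) in_V theta_cases[of s z] unfolding adj_def by auto

private lemma third_candidates_from_s: "third_candidates V \<theta> s y' \<subseteq> {e}"
proof (rule third_candidates_subsetI)
  fix w z assume w: "w \<in> V" "z \<in> V" "adj \<theta> s w" "\<theta> w y' \<noteq> 1" "adj \<theta> w z" "z \<noteq> s" "z \<noteq> y'"
    "\<theta> z s \<noteq> 1"
  have w_y: "w = y"
  proof (cases "w \<in> X")
    case True
    then have "\<theta> y' w = 1" using Y_vertex_splits_edge[OF antiedge(2) s(1) True w(3)] signs by auto
    then show ?thesis using w(1,4) theta_sym in_V by simp
  next
    case False
    then have "w \<in> Y" "w \<noteq> y'" using X_or_Y w(1,3) s(4) strong_antiadj_not_adj[of \<theta>] by blast+
    then show ?thesis using others w(4) by blast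
  qed
  show "z = e"
  proof (cases "z \<in> X")
    case False
    then have "z \<in> Y" "z \<noteq> y" using X_or_Y w(2,5) w_y adj_neq[of \<theta>] by blast+
    then show ?thesis using others w(7,8) by blast
  next
    case z: True
    have z_y: "\<theta> z y = 1" using Y_X_adj_strong[OF z antiedge(1)] w(5) w_y theta_sym in_V w(2) by simp
    show ?thesis
    proof (rule ccontr)
      assume "z \<noteq> e"
      moreover have "z \<noteq> e'" using z_y signs by auto
      moreover have "\<not> adj \<theta> s z" using s_adj_strong[OF w(2)] w(2,8) theta_sym in_V by auto
      ultimately show False using no_other[OF z] w(6) z_y by blast
    qed
  qed
qed

private lemma no_third_candidate_through_X:
  assumes w: "w \<in> X" "w \<noteq> e" "w \<noteq> e'" "adj \<theta> y' w" "\<theta> w s \<noteq> 1"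
    and z: "z \<in> V" "adj \<theta> w z" "z \<noteq> y'" "z \<noteq> s" "\<theta> z y' \<noteq> 1"
  shows False
proof -
  have w_V: "w \<in> V" using w(1) X_in_V by blast
  have w_s: "w \<noteq> s" "\<not> adj \<theta> s w"
    using w(4) signs strong_antiadj_not_adj[of \<theta> y' s] apply blast
    using s_adj_strong[OF w_V] w(5) theta_sym w_V in_V by auto
  have "\<theta> w y' = 1" using Y_X_adj_strong[OF w(1) antiedge(2) w(4)] theta_sym w_V in_V by simp
  then have w_y: "\<theta> y w = -1"
    using X_vertex_splits_antiedge[OF w(1) antiedge(1,2)] antiedge(3,4) theta_sym w_V in_V
    unfolding antiadj_def by auto
  show False
  proof (cases "z \<in> X")
    case False
    then have "z \<in> Y" "z \<noteq> y"
      using X_or_Y z(1,2) w_y theta_sym w_V in_V strong_antiadj_not_adj[of \<theta> w y] by auto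
    then show False using others z(3,5) by blast
  next
    case True
    have "adj \<theta> z w" using z(2) adj_commute w_V X_in_V[OF True] by blast
    moreover have "adj \<theta> e' e" using edge(3) adj_commute in_V by blast
    ultimately have "z \<noteq> e" "z \<noteq> e'"
      using X_neighbour_unique[OF edge(1) w(1) edge(2) _ edge(3)]
        X_neighbour_unique[OF edge(2) w(1) edge(1)] w(2,3) by blast+
    moreover have "\<theta> z y = 1"
      using Y_vertex_splits_edge[OF antiedge(1) w(1) True z(2)] w_y theta_sym in_V X_in_V[OF True] by auto
    moreover have "\<not> adj \<theta> s z"
      using X_neighbour_unique[OF True w(1) s(1)] z(2) w_s(1) adj_commute in_V w_V X_in_V[OF True] by blast
    ultimately show False using no_other[OF True] z(4) by blast
  qed
qed

private lemma third_candidates_from_y': "third_candidates V \<theta> y' s \<subseteq> {e}"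
proof (rule third_candidates_subsetI)
  fix w z assume w: "w \<in> V" "z \<in> V" "adj \<theta> y' w" "\<theta> w s \<noteq> 1" "adj \<theta> w z" "z \<noteq> y'"
    "z \<noteq> s" "\<theta> z y' \<noteq> 1"
  have w_X: "w \<in> X"
  proof (rule ccontr)
    assume "w \<notin> X"
    moreover have "w \<noteq> y" "w \<noteq> y'" using w(3) signs strong_antiadj_not_adj[of \<theta>] adj_neq[of \<theta>] by auto
    ultimately show False using others X_or_Y w(1,4) by blast
  qed
  have "w = e'"
  proof (rule ccontr)
    assume "w \<noteq> e'"
    moreover have "w \<noteq> e"
      using Y_X_adj_strong[OF w_X antiedge(2) w(3)] signs theta_sym in_V by auto
    ultimately show False using no_third_candidate_through_X[OF w_X _ _ w(3,4) w(2,5,6,7,8)] by blast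
  qed
  show "z = e"
  proof (cases "z \<in> X")
    case True
    then show ?thesis
      using X_neighbour_unique[OF edge(2) True edge(1)] w(5) \<open>w = e'\<close> edge(3) adj_commute in_V by blast
  next
    case False
    then have "z \<in> Y" "z \<noteq> y"
      using X_or_Y w(2,5) \<open>w = e'\<close> signs strong_antiadj_not_adj[of \<theta>] by blast+
    then show ?thesis using others w(6,8) by blast
  qed
qed

lemma even_pair_around_switchable_edge: "even_pair V \<theta> s y'"
  using even_pair_if_common_third_candidate[OF trigraph _ _ _ s(4) third_candidates_from_s
      third_candidates_from_y'] in_V s(1) antiedge(2) X_not_in_Y by blast

end

lemma Y_vertex_strong_end:
  assumes "y \<in> Y" "a \<in> X" "b \<in> X" "adj \<theta> a b"
  obtains c c' where "{c, c'} = {a, b}" "c \<in> X" "c' \<in> X" "adj \<theta> c c'" "\<theta> c y = 1"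
proof -
  have "\<theta> a y = 1 \<or> \<theta> b y = 1"
    using Y_vertex_splits_edge[OF assms] theta_sym assms(1-3) X_in_V Y_in_V by auto
  moreover have "adj \<theta> b a" using assms(4) adj_commute assms(2,3) X_in_V by blast
  ultimately show ?thesis using that assms by (metis insert_commute)
qed

lemma Y_vertex_has_antineighbour:
  assumes universal_complete:
      "\<forall>x\<in>X. \<forall>s\<in>Y. (\<forall>w\<in>Y. w \<noteq> s \<longrightarrow> \<theta> w s = 1) \<longrightarrow> \<theta> s x = 1"
    and ab: "a \<in> X" "b \<in> X" "adj \<theta> a b" and s: "s \<in> Y"
  shows "\<exists>w\<in>Y. w \<noteq> s \<and> antiadj \<theta> s w"
proof (rule ccontr)
  assume none: "\<not> ?thesis"
  have "\<forall>w\<in>Y. w \<noteq> s \<longrightarrow> \<theta> w s = 1"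
  proof (intro ballI impI)
    fix w assume "w \<in> Y" "w \<noteq> s"
    then have "\<theta> s w = 1" using none not_antiadj_strong_adj[of s w] s Y_in_V by blast
    then show "\<theta> w s = 1" using theta_sym[of s w] s \<open>w \<in> Y\<close> Y_in_V by simp
  qed
  then have "\<theta> s a = 1" "\<theta> s b = 1" using universal_complete ab(1,2) s by blast+
  then show False using Y_vertex_splits_edge[OF s ab] by auto
qed

lemma even_pair_X_edge_Y_antiedge:
  assumes ab: "a \<in> X" "b \<in> X" "adj \<theta> a b"
    and y: "y \<in> Y" "y' \<in> Y" "antiadj \<theta> y y'" and Y: "Y = {y, y'}"
  shows "\<exists>u v. even_pair V \<theta> u v"
proof -
  obtain c c' where cc: "{c, c'} = {a, b}" "c \<in> X" "c' \<in> X" "adj \<theta> c c'" "\<theta> c y = 1"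
    using Y_vertex_strong_end[OF y(1) ab] .
  have V: "c \<in> V" "c' \<in> V" "y \<in> V" "y' \<in> V" using cc y X_in_V Y_in_V by auto
  have "\<theta> y c = 1" using cc(5) theta_sym V by simp
  then have "\<theta> c' y = -1" using Y_vertex_splits_edge[OF y(1) cc(2,3,4)] theta_sym V by auto
  then have c'_y': "\<theta> c' y' = 1" using X_vertex_splits_antiedge[OF cc(3) y] by auto
  have others: "\<forall>w\<in>Y. w \<noteq> y \<longrightarrow> w \<noteq> y' \<longrightarrow> \<theta> w u = 1 \<and> \<theta> w v = 1"
    "\<forall>w\<in>Y. w \<noteq> y' \<longrightarrow> w \<noteq> y \<longrightarrow> \<theta> w u = 1 \<and> \<theta> w v = 1" for u v
    using Y by blast+
  show ?thesis
  proof (cases "X = {c, c'}")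
    case True
    then show ?thesis using even_pair_on_four_vertices[OF cc(2,3,4) True y Y cc(5)] by blast
  next
    case False
    then obtain x where x: "x \<in> X" "x \<noteq> c" "x \<noteq> c'" using cc by blast
    have "\<not> adj \<theta> c x" "\<not> adj \<theta> c' x"
      using X_neighbour_unique[OF cc(2,3) x(1) cc(4)] x(3)
        X_neighbour_unique[OF cc(3,2) x(1)] cc(4) adj_commute V x(2) by blast+
    moreover have "\<theta> x y = 1 \<or> \<theta> x y' = 1" using X_vertex_splits_antiedge[OF x(1) y] by auto
    moreover have "antiadj \<theta> y' y" using y(3) antiadj_commute V by blast
    ultimately show ?thesis
      using even_pair_in_X_common_Y_neighbour[OF cc(2) x(1) x(2)[symmetric] _ y cc(5) _ others(1)]
        even_pair_in_X_common_Y_neighbour[OF cc(3) x(1) x(3)[symmetric] _ y(2,1) _ c'_y' _ others(2)]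
      by blast
  qed
qed

lemma even_pair_or_complete_X_stable_Y_universal:
  assumes universal_complete:
      "\<forall>x\<in>X. \<forall>s\<in>Y. (\<forall>w\<in>Y. w \<noteq> s \<longrightarrow> \<theta> w s = 1) \<longrightarrow> \<theta> s x = 1"
    and X_stable: "\<forall>a\<in>X. \<forall>b\<in>X. \<not> adj \<theta> a b"
    and Y_universal: "\<And>t. t \<in> Y \<Longrightarrow> \<forall>w\<in>Y. w \<noteq> t \<longrightarrow> \<theta> w t = 1"
  shows "complete_tg V \<theta> \<or> (\<exists>u v. even_pair V \<theta> u v)"
proof (cases "\<exists>u\<in>X. \<exists>v\<in>X. u \<noteq> v")
  case True
  then obtain u v where uv: "u \<in> X" "v \<in> X" "u \<noteq> v" by blast
  have "\<theta> u v = -1" using not_adj_strong_antiadj[of u v] uv X_in_V X_stable by blast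
  moreover have "\<forall>w\<in>Y. adj \<theta> u w \<longrightarrow> \<theta> w v = 1" using universal_complete uv(2) Y_universal by blast
  ultimately show ?thesis using even_pair_in_X[OF uv] X_stable uv(1) by blast
next
  case False
  have "adj \<theta> u v" if uv: "u \<in> V" "v \<in> V" "u \<noteq> v" for u v
  proof -
    have "\<theta> u v = 1 \<or> \<theta> v u = 1"
      using False uv partition universal_complete Y_universal by (metis UnE)
    then show ?thesis using uv theta_sym strong_adj_adj[of \<theta>] by metis
  qed
  then show ?thesis unfolding complete_tg_def clique_def by blast
qed

lemma even_pair_X_stable_same_sign:
  assumes X_stable: "\<forall>a\<in>X. \<forall>b\<in>X. \<not> adj \<theta> a b"
    and y: "y \<in> Y" "y' \<in> Y" "antiadj \<theta> y y'"
    and others: "\<And>t x. t \<in> Y \<Longrightarrow> t \<noteq> y \<Longrightarrow> t \<noteq> y' \<Longrightarrow> x \<in> X \<Longrightarrow> \<theta> t x = 1"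
    and uv: "u \<in> X" "v \<in> X" "u \<noteq> v" "\<theta> u y = \<theta> v y"
  shows "even_pair V \<theta> u v"
proof -
  have "\<theta> v w = 1" if w: "w \<in> Y" "adj \<theta> u w" for w
  proof -
    have u_w: "\<theta> u w = 1" using X_Y_adj_strong[OF uv(1) w] .
    consider "w = y" | "w = y'" | "w \<noteq> y" "w \<noteq> y'" by blast
    then show ?thesis
    proof cases
      case 2
      then have "\<theta> v y = -1" using X_vertex_splits_antiedge[OF uv(1) y] u_w uv(4) by auto
      then show ?thesis using X_vertex_splits_antiedge[OF uv(2) y] 2 by auto
    next
      case 3
      then show ?thesis using others[OF w(1) _ _ uv(2)] theta_sym w(1) uv(2) X_in_V Y_in_V by simp
    qed (use u_w uv(4) in simp)
  qed
  then have "\<forall>w\<in>Y. adj \<theta> u w \<longrightarrow> \<theta> w v = 1" using theta_sym X_in_V Y_in_V uv(2) by auto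
  moreover have "\<theta> u v = -1" using not_adj_strong_antiadj uv(1-3) X_in_V X_stable by blast
  ultimately show ?thesis using even_pair_in_X[OF uv(1-3)] X_stable uv(1) by blast
qed

lemma even_pair_or_complete_X_stable_antiedge:
  assumes X_stable: "\<forall>a\<in>X. \<forall>b\<in>X. \<not> adj \<theta> a b"
    and Y_adj: "\<forall>y\<in>Y. \<forall>y'\<in>Y. y \<noteq> y' \<longrightarrow> \<theta> y y' \<noteq> -1"
    and y: "y \<in> Y" "y' \<in> Y" "antiadj \<theta> y y'"
    and others: "\<And>t. t \<in> Y \<Longrightarrow> t \<noteq> y \<Longrightarrow> t \<noteq> y' \<Longrightarrow>
      (\<forall>w\<in>Y. w \<noteq> t \<longrightarrow> \<theta> w t = 1) \<and> (\<forall>x\<in>X. \<theta> t x = 1)"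
  shows "complete_tg V \<theta> \<or> (\<exists>u v. even_pair V \<theta> u v)"
proof (cases "\<exists>u\<in>X. \<exists>v\<in>X. u \<noteq> v \<and> \<theta> u y = \<theta> v y")
  case True
  then show ?thesis using even_pair_X_stable_same_sign[OF X_stable y] others by blast
next
  case False
  then have distinct_signs: "\<forall>u\<in>X. \<forall>v\<in>X. u \<noteq> v \<longrightarrow> \<theta> u y \<noteq> \<theta> v y" by blast
  have y'_y: "antiadj \<theta> y' y" using y antiadj_commute Y_in_V by blast
  show ?thesis
  proof (cases "X = {}")
    case True
    then have "\<forall>u\<in>V. \<forall>v\<in>V. u \<noteq> v \<longrightarrow> adj \<theta> u v" using Y_adj partition adj_iff by auto
    then show ?thesis unfolding complete_tg_def clique_def by blast
  next
    case False
    then obtain x where x: "x \<in> X" by blast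
    then consider "\<theta> x y = 1" "\<theta> x y' = -1" | "\<theta> x y = -1" "\<theta> x y' = 1"
      using X_vertex_splits_antiedge[OF x y] by blast
    then show ?thesis
    proof cases
      case 1
      then have "\<forall>x2\<in>X. x2 \<noteq> x \<longrightarrow> \<theta> x2 y \<noteq> 1" using distinct_signs x by metis
      then show ?thesis using even_pair_X_stable_antiedge_end[OF X_stable y _ x 1(2)] others by blast
    next
      case 2
      have "\<theta> x2 y' \<noteq> 1" if "x2 \<in> X" "x2 \<noteq> x" for x2
      proof -
        have "\<theta> x2 y = 1" using distinct_signs that x 2(1) X_Y_strong[OF that(1) y(1)] by force
        then show ?thesis using X_vertex_splits_antiedge[OF that(1) y] by auto
      qed
      then show ?thesis
        using even_pair_X_stable_antiedge_end[OF X_stable y(2,1) y'_y _ x 2(1)] others by blast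
    qed
  qed
qed

lemma even_pair_avoiding_switchable_Y:
  assumes Y: "Y = {r, r'}" and r: "antiadj \<theta> r r'"
    and not_clique: "\<not> clique \<theta> (V - ({r, r'} \<union> nbhd V \<theta> r))"
  shows "\<exists>w z. even_pair V \<theta> w z \<and> w \<notin> {r, r'} \<and> z \<notin> {r, r'}"
proof -
  obtain w z where wz: "w \<in> V - ({r, r'} \<union> nbhd V \<theta> r)" "z \<in> V - ({r, r'} \<union> nbhd V \<theta> r)"
      "w \<noteq> z" "\<not> adj \<theta> w z"
    using not_clique unfolding clique_def by blast
  have rY: "r \<in> Y" "r' \<in> Y" using Y by auto
  have r'_r: "antiadj \<theta> r' r" using r antiadj_commute rY Y_in_V by blast
  have far_side: "x \<in> X \<and> \<theta> x r' = 1" if x: "x \<in> V - ({r, r'} \<union> nbhd V \<theta> r)" for x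
  proof -
    have x_X: "x \<in> X" using x Y partition by blast
    moreover have "\<theta> x r = -1"
      using x not_adj_strong_antiadj[of r x] theta_sym[of x r] rY Y_in_V unfolding nbhd_def by auto
    ultimately show ?thesis using X_vertex_splits_antiedge[OF x_X rY(2,1) r'_r] by auto
  qed
  have "\<forall>t\<in>Y. t \<noteq> r' \<longrightarrow> t \<noteq> r \<longrightarrow> \<theta> t w = 1 \<and> \<theta> t z = 1" using Y by blast
  then have "even_pair V \<theta> w z"
    using even_pair_in_X_common_Y_neighbour[OF _ _ wz(3,4) rY(2,1) r'_r] far_side wz(1,2) by blast
  then show ?thesis using wz by blast
qed

end

locale good_partitioned_F = good_partitioned +
  assumes class_F: "class_F V \<theta>"
    and no_antihole6: "\<not> (\<exists>hs. is_antihole V \<theta> hs \<and> length hs = 6)"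
begin

lemma switchable_pair_unique:
  assumes a: "p \<in> V" "q \<in> V" "p \<noteq> q" "\<theta> p q = 0"
    and b: "p' \<in> V" "q' \<in> V" "p' \<noteq> q'" "\<theta> p' q' = 0"
  shows "{p, q} = {p', q'}"
proof -
  note H = conjunct1[OF conjunct2[OF class_F[unfolded class_F_def]]]
  show ?thesis using bspec[OF bspec[OF H sw_pair_in_components[OF a]] sw_pair_in_components[OF b]] .
qed

lemma switchable_pair_small:
  assumes a: "p \<in> V" "q \<in> V" "p \<noteq> q" "\<theta> p q = 0"
  shows "nbhd V \<theta> p \<inter> nbhd V \<theta> q = {}"
proof -
  have qp: "\<theta> q p = 0" using theta_sym a by metis
  have e: "sw_edges V \<theta> {p, q} = {{p, q}}"
    unfolding sw_edges_def sw_rel_def using a qp by auto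
  note H = conjunct2[OF conjunct2[OF class_F[unfolded class_F_def]]]
  have "\<forall>x y. sw_edges V \<theta> {p, q} = {{x, y}} \<longrightarrow> nbhd V \<theta> x \<inter> nbhd V \<theta> y = {}"
    using conjunct1[OF conjunct2[OF bspec[OF H sw_pair_in_components[OF a]]]] .
  then show ?thesis using e by blast
qed

lemma sw_D_eq_pair:
  assumes a: "p \<in> V" "q \<in> V" "p \<noteq> q" "\<theta> p q = 0"
  shows "sw_D V \<theta> = {p, q}"
proof
  show "sw_D V \<theta> \<subseteq> {p, q}"
  proof
    fix u assume "u \<in> sw_D V \<theta>"
    then obtain w where "u \<in> V" "w \<in> V" "w \<noteq> u" "\<theta> u w = 0" using sw_D_iff[OF trigraph] by blast
    then show "u \<in> {p, q}" using switchable_pair_unique[OF a, of u w] by auto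
  qed
  have qp: "\<theta> q p = 0" using theta_sym a by metis
  have "\<exists>w\<in>V. w \<noteq> p \<and> \<theta> p w = 0" using a by (intro bexI[of _ q]) auto
  then have P: "p \<in> sw_D V \<theta>" using sw_D_iff[OF trigraph, of p] a by blast
  have "\<exists>w\<in>V. w \<noteq> q \<and> \<theta> q w = 0" using a qp by (intro bexI[of _ p]) auto
  then have Q: "q \<in> sw_D V \<theta>" using sw_D_iff[OF trigraph, of q] a by blast
  show "{p, q} \<subseteq> sw_D V \<theta>" using P Q by blast
qed

lemma Y_single_antiedge:
  assumes universal_complete:
      "\<forall>x\<in>X. \<forall>s\<in>Y. (\<forall>w\<in>Y. w \<noteq> s \<longrightarrow> \<theta> w s = 1) \<longrightarrow> \<theta> s x = 1"
    and ab: "a \<in> X" "b \<in> X" "adj \<theta> a b" and y: "y \<in> Y"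
  obtains y' where "y' \<in> Y" "y' \<noteq> y" "antiadj \<theta> y y'" "Y = {y, y'}"
proof -
  note antineighbour = Y_vertex_has_antineighbour[OF universal_complete ab]
  obtain y' where y': "y' \<in> Y" "y' \<noteq> y" "antiadj \<theta> y y'" using antineighbour[OF y] by blast
  have "w \<in> {y, y'}" if w: "w \<in> Y" for w
  proof (rule ccontr)
    assume "w \<notin> {y, y'}"
    moreover obtain w' where w': "w' \<in> Y" "w' \<noteq> w" "antiadj \<theta> w w'" using antineighbour[OF w] by blast
    moreover have "w' \<noteq> y" "w' \<noteq> y'"
      using Y_antineighbour_unique[OF y w y'(1) _ y'(3)]
        Y_antineighbour_unique[OF y'(1) w y] y'(3) w' calculation(1) antiadj_commute Y_in_V w y
      by blast+
    ultimately show False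
      using antihole6_of_edge_and_antiedges[OF ab y y'(1) w w'(1) y'(3) w'(3)] no_antihole6 by blast
  qed
  then show thesis using that y' y by blast
qed

lemma even_pair_or_complete_X_edge:
  assumes universal_complete:
      "\<forall>x\<in>X. \<forall>s\<in>Y. (\<forall>w\<in>Y. w \<noteq> s \<longrightarrow> \<theta> w s = 1) \<longrightarrow> \<theta> s x = 1"
    and ab: "a \<in> X" "b \<in> X" "adj \<theta> a b"
  shows "complete_tg V \<theta> \<or> (\<exists>u v. even_pair V \<theta> u v)"
proof (cases "Y = {}")
  case True
  show ?thesis
  proof (cases "\<exists>u\<in>X. \<exists>v\<in>X. u \<noteq> v \<and> \<not> adj \<theta> u v")
    case True
    then obtain u v where uv: "u \<in> X" "v \<in> X" "u \<noteq> v" "\<not> adj \<theta> u v" by blast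
    then have "\<theta> u v = -1" using not_adj_strong_antiadj X_in_V by blast
    then show ?thesis using even_pair_in_X[OF uv(1-3)] \<open>Y = {}\<close> by blast
  next
    case False
    then show ?thesis using \<open>Y = {}\<close> partition unfolding complete_tg_def clique_def by blast
  qed
next
  case False
  then obtain y where y: "y \<in> Y" by blast
  obtain y' where "y' \<in> Y" "antiadj \<theta> y y'" "Y = {y, y'}"
    using Y_single_antiedge[OF universal_complete ab y] by metis
  then show ?thesis using even_pair_X_edge_Y_antiedge[OF ab y] by blast
qed

lemma Y_others_universal:
  assumes universal_complete:
      "\<forall>x\<in>X. \<forall>s\<in>Y. (\<forall>w\<in>Y. w \<noteq> s \<longrightarrow> \<theta> w s = 1) \<longrightarrow> \<theta> s x = 1"
    and Y_adj: "\<forall>y\<in>Y. \<forall>y'\<in>Y. y \<noteq> y' \<longrightarrow> \<theta> y y' \<noteq> -1"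
    and y: "y \<in> Y" "y' \<in> Y" "y \<noteq> y'" "\<theta> y y' = 0"
    and t: "t \<in> Y" "t \<noteq> y" "t \<noteq> y'"
  shows "(\<forall>w\<in>Y. w \<noteq> t \<longrightarrow> \<theta> w t = 1) \<and> (\<forall>x\<in>X. \<theta> t x = 1)"
proof -
  have "\<theta> w t = 1" if w: "w \<in> Y" "w \<noteq> t" for w
  proof -
    have "\<theta> w t \<noteq> 0"
    proof
      assume "\<theta> w t = 0"
      then have "{w, t} = {y, y'}" using switchable_pair_unique[of w t y y'] w t y Y_in_V by blast
      then show False using t by (metis doubleton_eq_iff)
    qed
    then show ?thesis using theta_cases[of w t] Y_adj w t(1) Y_in_V by blast
  qed
  then show ?thesis using universal_complete t(1) by blast
qed

lemma even_pair_or_complete_X_stable: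
  assumes universal_complete:
      "\<forall>x\<in>X. \<forall>s\<in>Y. (\<forall>w\<in>Y. w \<noteq> s \<longrightarrow> \<theta> w s = 1) \<longrightarrow> \<theta> s x = 1"
    and X_stable: "\<forall>a\<in>X. \<forall>b\<in>X. \<not> adj \<theta> a b"
  shows "complete_tg V \<theta> \<or> (\<exists>u v. even_pair V \<theta> u v)"
proof (cases "\<exists>y\<in>Y. \<exists>y'\<in>Y. y \<noteq> y' \<and> \<theta> y y' = -1")
  case True
  then show ?thesis using even_pair_Y_antiedge_X_stable X_stable by blast
next
  case False
  then have Y_adj: "\<forall>y\<in>Y. \<forall>y'\<in>Y. y \<noteq> y' \<longrightarrow> \<theta> y y' \<noteq> -1" by blast
  show ?thesis
  proof (cases "\<exists>y\<in>Y. \<exists>y'\<in>Y. y \<noteq> y' \<and> \<theta> y y' = 0")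
    case True
    then obtain y y' where y: "y \<in> Y" "y' \<in> Y" "y \<noteq> y'" "\<theta> y y' = 0" by blast
    then have "antiadj \<theta> y y'" unfolding antiadj_def by simp
    then show ?thesis
      using even_pair_or_complete_X_stable_antiedge[OF X_stable Y_adj y(1,2)]
        Y_others_universal[OF universal_complete Y_adj y] by blast
  next
    case False
    then have "\<And>t. t \<in> Y \<Longrightarrow> \<forall>w\<in>Y. w \<noteq> t \<longrightarrow> \<theta> w t = 1"
      using Y_adj theta_cases Y_in_V by metis
    then show ?thesis
      using even_pair_or_complete_X_stable_Y_universal[OF universal_complete X_stable] by blast
  qed
qed

lemma even_pair_or_complete: "complete_tg V \<theta> \<or> (\<exists>u v. even_pair V \<theta> u v)"
proof (cases "\<exists>x\<in>X. \<exists>s\<in>Y. (\<forall>w\<in>Y. w \<noteq> s \<longrightarrow> \<theta> w s = 1) \<and> \<theta> x s = -1")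
  case True
  then show ?thesis using even_pair_X_Y_universal by blast
next
  case False
  then have "\<forall>x\<in>X. \<forall>s\<in>Y. (\<forall>w\<in>Y. w \<noteq> s \<longrightarrow> \<theta> w s = 1) \<longrightarrow> \<theta> s x = 1"
    using X_Y_strong theta_sym X_in_V Y_in_V by force
  then show ?thesis
    using even_pair_or_complete_X_edge even_pair_or_complete_X_stable by blast
qed

lemma Y_universal_beyond_antiedge:
  assumes ab: "a \<in> X" "b \<in> X" "adj \<theta> a b"
    and y: "y \<in> Y" "y' \<in> Y" "antiadj \<theta> y y'" and t: "t \<in> Y" "t \<noteq> y" "t \<noteq> y'"
  shows "\<forall>w\<in>Y. w \<noteq> t \<longrightarrow> \<theta> w t = 1"
proof (intro ballI impI)
  fix w assume w: "w \<in> Y" "w \<noteq> t"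
  show "\<theta> w t = 1"
  proof (rule ccontr)
    assume "\<theta> w t \<noteq> 1"
    then have t_w: "antiadj \<theta> t w" using antiadjI[of w t] antiadj_commute w t Y_in_V by blast
    have y'_y: "antiadj \<theta> y' y" using y antiadj_commute Y_in_V by blast
    have "w \<noteq> y" "w \<noteq> y'"
      using Y_antineighbour_unique[OF y(1) t(1) y(2) _ y(3)]
        Y_antineighbour_unique[OF y(2) t(1) y(1) _ y'_y]
        t_w t antiadj_commute w(1) Y_in_V by blast+
    then show False using antihole6_of_edge_and_antiedges[OF ab y(1,2) t(1) w(1) y(3) t_w] t(2,3)
      no_antihole6 by blast
  qed
qed

context
  fixes a b
  assumes pair: "a \<in> X" "b \<in> X" "a \<noteq> b" "\<theta> a b = 0"
begin

private lemma pair_adj: "adj \<theta> a b"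
  using pair unfolding adj_def by simp

private lemma pair_unique: "p \<in> V \<Longrightarrow> q \<in> V \<Longrightarrow> p \<noteq> q \<Longrightarrow> \<theta> p q = 0 \<Longrightarrow> {p, q} = {a, b}"
  using switchable_pair_unique[of p q a b] pair X_in_V by blast

private lemma Y_antiedge_strong:
  assumes "y \<in> Y" "y' \<in> Y" "antiadj \<theta> y y'"
  shows "\<theta> y y' = -1"
proof -
  have "\<theta> y y' \<noteq> 0"
  proof
    assume "\<theta> y y' = 0"
    then have "y \<in> {a, b}" using pair_unique[of y y'] assms Y_in_V unfolding antiadj_def by blast
    then show False using pair(1,2) X_not_in_Y assms(1) by blast
  qed
  then show ?thesis using assms(3) unfolding antiadj_def by auto
qed

private lemma even_pair_from_strong_end:
  assumes y: "y \<in> Y" "y' \<in> Y" "y \<noteq> y'" "\<theta> y y' = -1"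
    and s: "s \<in> X" "s \<noteq> a" "s \<noteq> b" "\<theta> s y = 1" "\<theta> s y' = -1"
    and others: "\<And>t. t \<in> Y \<Longrightarrow> t \<noteq> y \<Longrightarrow> t \<noteq> y' \<Longrightarrow>
      (\<forall>w\<in>Y. w \<noteq> t \<longrightarrow> \<theta> w t = 1) \<and> (\<forall>x\<in>X. x \<noteq> a \<longrightarrow> x \<noteq> b \<longrightarrow> \<theta> t x = 1)"
  shows "\<exists>u v. even_pair V \<theta> u v \<and> u \<notin> {a, b} \<and> v \<notin> {a, b}"
proof (cases "\<exists>v\<in>X. v \<noteq> a \<and> v \<noteq> b \<and> v \<noteq> s \<and> \<not> adj \<theta> s v \<and> \<theta> v y = 1")
  case True
  then obtain v where v: "v \<in> X" "v \<noteq> a" "v \<noteq> b" "v \<noteq> s" "\<not> adj \<theta> s v" "\<theta> v y = 1" by blast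
  have "antiadj \<theta> y y'" using y unfolding antiadj_def by simp
  moreover have "\<forall>w\<in>Y. w \<noteq> y \<longrightarrow> w \<noteq> y' \<longrightarrow> \<theta> w s = 1 \<and> \<theta> w v = 1" using others s v by blast
  ultimately show ?thesis
    using even_pair_in_X_common_Y_neighbour[OF s(1) v(1) v(4)[symmetric] v(5) y(1,2) _ s(4) v(6)] s v
    by blast
next
  case False
  obtain e e' where e: "{e, e'} = {a, b}" "e \<in> X" "e' \<in> X" "adj \<theta> e e'" "\<theta> e y = 1"
    using Y_vertex_strong_end[OF y(1) pair(1,2) pair_adj] .
  have "\<theta> t y' = 1 \<and> \<theta> t s = 1" if t: "t \<in> Y" "t \<noteq> y" "t \<noteq> y'" for t
  proof -
    have "\<theta> y' t = 1" using others[OF t] y(2) t(3) by auto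
    moreover have "\<theta> t s = 1" using others[OF t] s(1-3) by blast
    ultimately
show ?thesis using theta_sym[of y' t] y(2) t(1) Y_in_V by simp
  qed
  moreover have "{p, q} = {e, e'}" if "p \<in> V" "q \<in> V" "p \<noteq> q" "\<theta> p q = 0" for p q
    using pair_unique[OF that] e(1) by simp
  moreover have "s \<noteq> e" "s \<noteq> e'" using e(1) s(2,3) by auto
  moreover have "\<theta> v y \<noteq> 1" if "v \<in> X" "v \<noteq> e" "v \<noteq> e'" "v \<noteq> s" "\<not> adj \<theta> s v" for v
  proof -
    have "v \<noteq> a" "v \<noteq> b" using e(1) that(2,3) by auto
    then show ?thesis using False that by blast
  qed
  ultimately have "even_pair V \<theta> s y'"
    using even_pair_around_switchable_edge[OF e(2,3,4) _ y(1,2,4,3) s(1) _ _ s(5) e(5)] by blast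
  moreover have "y' \<notin> {a, b}" using pair y X_not_in_Y by blast
  ultimately show ?thesis using s by blast
qed

lemma X_beyond_switchable_pair:
  assumes y: "y \<in> Y" "y' \<in> Y" "antiadj \<theta> y y'"
    and not_clique: "\<not> clique \<theta> (V - ({a, b} \<union> nbhd V \<theta> a)) \<or> \<not> clique \<theta> (V - ({a, b} \<union> nbhd V \<theta> b))"
  shows "\<exists>s\<in>X. s \<noteq> a \<and> s \<noteq> b"
proof (rule ccontr)
  assume "\<not> ?thesis"
  then have Y_rest: "V - {a, b} \<subseteq> Y" using partition by blast
  have "clique \<theta> (V - ({a, b} \<union> nbhd V \<theta> r))" if r: "r \<in> X" for r
    unfolding clique_def
  proof (intro ballI impI)
    fix w z assume w: "w \<in> V - ({a, b} \<union> nbhd V \<theta> r)" and z: "z \<in> V - ({a, b} \<union> nbhd V \<theta> r)"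
      and "w \<noteq> z"
    have wz_Y: "w \<in> Y" "z \<in> Y" using w z Y_rest by auto
    show "adj \<theta> w z"
    proof (rule ccontr)
      assume "\<not> adj \<theta> w z"
      then have "\<theta> w z = -1" "\<theta> z w = -1"
        using not_adj_strong_antiadj \<open>w \<noteq> z\<close> wz_Y Y_in_V theta_sym by metis+
      then have "{w, z} \<subseteq> {y, y'}"
        using Y_universal_beyond_antiedge[OF pair(1,2) pair_adj y] wz_Y \<open>w \<noteq> z\<close> by force
      moreover have "adj \<theta> r y \<or> adj \<theta> r y'"
        using X_vertex_splits_antiedge[OF r y] r y X_not_in_Y strong_adj_adj[of \<theta>] by metis
      ultimately show False using w z \<open>w \<noteq> z\<close> unfolding nbhd_def by blast
    qed
  qed
  then show False using not_clique pair(1,2) by blast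
qed

context
  assumes universal_complete: "\<forall>x\<in>X. x \<noteq> a \<longrightarrow> x \<noteq> b \<longrightarrow>
    (\<forall>s\<in>Y. (\<forall>w\<in>Y. w \<noteq> s \<longrightarrow> \<theta> w s = 1) \<longrightarrow> \<theta> s x = 1)"
begin

lemma even_pair_avoiding_switchable_X_Y_clique:
  assumes Y_clique: "\<forall>y\<in>Y. \<forall>y'\<in>Y. y \<noteq> y' \<longrightarrow> \<not> antiadj \<theta> y y'"
    and uv: "u \<in> V" "v \<in> V" "u \<noteq> v" "\<theta> u v = -1" "u \<notin> {a, b}" "v \<notin> {a, b}"
  shows "even_pair V \<theta> u v"
proof -
  have Y_universal: "\<forall>w\<in>Y. w \<noteq> t \<longrightarrow> \<theta> w t = 1" if "t \<in> Y" for t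
    using Y_clique not_antiadj_strong_adj that Y_in_V by blast
  then have complete_to_Y: "\<theta> t x = 1" if "t \<in> Y" "x \<in> V" "x \<notin> {a, b}" "x \<notin> Y" for t x
    using universal_complete that partition by blast
  have "u \<in> X" "v \<in> X"
    using complete_to_Y[of u v] complete_to_Y[of v u] Y_universal uv X_or_Y theta_sym by force+
  moreover have "\<forall>w\<in>Y. adj \<theta> u w \<longrightarrow> \<theta> w v = 1"
    using complete_to_Y calculation(2) uv(2,6) X_not_in_Y by blast
  moreover have "\<forall>u'\<in>X. adj \<theta> u u' \<longrightarrow> (\<forall>z\<in>Y. adj \<theta> u' z \<longrightarrow> \<theta> z u = 1)"
    using complete_to_Y calculation(1) uv(1,5) X_not_in_Y by blast
  ultimately show ?thesis using even_pair_in_X uv(3,4) by blast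
qed

lemma even_pair_avoiding_switchable_X_Y_antiedge:
  assumes y: "y \<in> Y" "y' \<in> Y" "antiadj \<theta> y y'"
    and not_clique: "\<not> clique \<theta> (V - ({a, b} \<union> nbhd V \<theta> a)) \<or> \<not> clique \<theta> (V - ({a, b} \<union> nbhd V \<theta> b))"
  shows "\<exists>u v. even_pair V \<theta> u v \<and> u \<notin> {a, b} \<and> v \<notin> {a, b}"
proof -
  have yy: "y \<noteq> y'" "\<theta> y y' = -1" "\<theta> y' y = -1"
    using y Y_antiedge_strong theta_sym Y_in_V unfolding antiadj_def by auto
  have others: "(\<forall>w\<in>Y. w \<noteq> t \<longrightarrow> \<theta> w t = 1) \<and> (\<forall>x\<in>X. x \<noteq> a \<longrightarrow> x \<noteq> b \<longrightarrow> \<theta> t x = 1)"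
    if "t \<in> Y" "t \<noteq> y" "t \<noteq> y'" for t
    using Y_universal_beyond_antiedge[OF pair(1,2) pair_adj y that] universal_complete that(1) by blast
  obtain s where s: "s \<in> X" "s \<noteq> a" "s \<noteq> b" using X_beyond_switchable_pair[OF y not_clique] by blast
  consider "\<theta> s y = 1" "\<theta> s y' = -1" | "\<theta> s y' = 1" "\<theta> s y = -1"
    using X_vertex_splits_antiedge[OF s(1) y] by blast
  then show ?thesis
  proof cases
    case 1
    then show ?thesis using even_pair_from_strong_end[OF y(1,2) yy(1,2) s] others by blast
  next
    case 2
    then show ?thesis
      using even_pair_from_strong_end[OF y(2,1) yy(1)[symmetric] yy(3) s] others by blast
  qed
qed

end

lemma even_pair_avoiding_switchable_X:
  assumes strong_antiedge: "\<exists>u\<in>V. \<exists>v\<in>V. u \<noteq> v \<and> \<theta> u v = -1 \<and> u \<notin> {a, b} \<and> v \<notin> {a, b}"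
    and not_clique: "\<not> clique \<theta> (V - ({a, b} \<union> nbhd V \<theta> a)) \<or> \<not> clique \<theta> (V - ({a, b} \<union> nbhd V \<theta> b))"
  shows "\<exists>u v. even_pair V \<theta> u v \<and> u \<notin> {a, b} \<and> v \<notin> {a, b}"
proof (cases "\<exists>x\<in>X. x \<noteq> a \<and> x \<noteq> b \<and> (\<exists>s\<in>Y. (\<forall>w\<in>Y. w \<noteq> s \<longrightarrow> \<theta> w s = 1) \<and> \<theta> x s = -1)")
  case True
  then obtain x s where xs: "x \<in> X" "x \<noteq> a" "x \<noteq> b" "s \<in> Y" "\<forall>w\<in>Y. w \<noteq> s \<longrightarrow> \<theta> w s = 1"
    "\<theta> x s = -1"
    by blast
  moreover have "s \<notin> {a, b}" using xs(4) pair X_not_in_Y by blast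
  ultimately show ?thesis using even_pair_X_Y_universal[OF xs(1,4,5,6)] by blast
next
  case False
  then have universal_complete: "\<forall>x\<in>X. x \<noteq> a \<longrightarrow> x \<noteq> b \<longrightarrow>
    (\<forall>s\<in>Y. (\<forall>w\<in>Y. w \<noteq> s \<longrightarrow> \<theta> w s = 1) \<longrightarrow> \<theta> s x = 1)"
    using X_Y_strong theta_sym X_in_V Y_in_V by force
  show ?thesis
  proof (cases "\<exists>y\<in>Y. \<exists>y'\<in>Y. y \<noteq> y' \<and> antiadj \<theta> y y'")
    case True
    then show ?thesis
      using even_pair_avoiding_switchable_X_Y_antiedge[OF universal_complete _ _ _ not_clique] by blast
  next
    case False
    then show ?thesis
      using even_pair_avoiding_switchable_X_Y_clique[OF universal_complete] strong_antiedge by blast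
  qed
qed

end

lemma Y_eq_switchable_pair:
  assumes pq: "p \<in> Y" "q \<in> Y" "p \<noteq> q" "\<theta> p q = 0"
  shows "Y = {p, q}"
proof (rule ccontr)
  assume "Y \<noteq> {p, q}"
  then obtain w where w: "w \<in> Y" "w \<noteq> p" "w \<noteq> q" using pq by blast
  have "antiadj \<theta> p q" "antiadj \<theta> q p"
    using pq antiadj_commute Y_in_V unfolding antiadj_def by auto
  then have "\<not> antiadj \<theta> p w" "\<not> antiadj \<theta> q w"
    using Y_antineighbour_unique[OF pq(1) w(1) pq(2)] Y_antineighbour_unique[OF pq(2) w(1) pq(1)] w(2,3)
    by blast+
  then have "\<theta> p w = 1" "\<theta> q w = 1" using not_antiadj_strong_adj pq(1,2) w Y_in_V by auto
  then have "w \<in> nbhd V \<theta> p \<inter> nbhd V \<theta> q"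
    using w Y_in_V unfolding nbhd_def adj_def by auto
  then show False using switchable_pair_small pq Y_in_V by blast
qed

lemma sw_D_empty: "\<not> (\<exists>p\<in>V. \<exists>q\<in>V. p \<noteq> q \<and> \<theta> p q = 0) \<Longrightarrow> sw_D V \<theta> = {}"
  by (auto simp: sw_D_iff[OF trigraph]) (metis theta_sym)

lemma even_pair_avoiding_switchable:
  assumes strong_antiedge: "\<exists>u\<in>V. \<exists>v\<in>V. u \<noteq> v \<and> \<theta> u v = -1 \<and> u \<notin> sw_D V \<theta> \<and> v \<notin> sw_D V \<theta>"
    and not_clique: "\<forall>x y. x \<noteq> y \<and> sw_D V \<theta> = {x, y} \<longrightarrow>
      \<not> clique \<theta> (V - (sw_D V \<theta> \<union> nbhd V \<theta> x)) \<or> \<not> clique \<theta> (V - (sw_D V \<theta> \<union> nbhd V \<theta> y))"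
  shows "\<exists>u v. even_pair V \<theta> u v \<and> u \<notin> sw_D V \<theta> \<and> v \<notin> sw_D V \<theta>"
proof (cases "\<exists>p\<in>V. \<exists>q\<in>V. p \<noteq> q \<and> \<theta> p q = 0")
  case True
  then obtain p q where pq: "p \<in> V" "q \<in> V" "p \<noteq> q" "\<theta> p q = 0" by blast
  have D: "sw_D V \<theta> = {p, q}" using sw_D_eq_pair[OF pq] .
  have not_clique': "\<not> clique \<theta> (V - ({p, q} \<union> nbhd V \<theta> p)) \<or> \<not> clique \<theta> (V - ({p, q} \<union> nbhd V \<theta> q))"
    using not_clique pq(3) unfolding D by blast
  consider "p \<in> X" "q \<in> X" | "p \<in> Y" "q \<in> Y"
    using pq(1,2,4) X_or_Y X_Y_not_switchable Y_X_not_switchable by blast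
  then show ?thesis
  proof cases
    case 1
    then show ?thesis
      using even_pair_avoiding_switchable_X[OF 1 pq(3,4) _ not_clique'] strong_antiedge D by simp
  next
    case 2
    have Y: "Y = {p, q}" "Y = {q, p}" using Y_eq_switchable_pair[OF 2 pq(3,4)] by auto
    have pq_anti: "antiadj \<theta> p q" "antiadj \<theta> q p" using pq theta_sym unfolding antiadj_def by auto
    from not_clique' show ?thesis
    proof
      assume "\<not> clique \<theta> (V - ({p, q} \<union> nbhd V \<theta> p))"
      then show ?thesis using even_pair_avoiding_switchable_Y[OF Y(1) pq_anti(1)] D by simp
    next
      assume "\<not> clique \<theta> (V - ({p, q} \<union> nbhd V \<theta> q))"
      then show ?thesis
        using even_pair_avoiding_switchable_Y[OF Y(2) pq_anti(2)] D by (simp add: insert_commute)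
    qed
  qed
next
  case False
  moreover obtain u v where "u \<in> V" "v \<in> V" "u \<noteq> v" "\<theta> u v = -1" using strong_antiedge by blast
  then have "\<not> complete_tg V \<theta>" unfolding complete_tg_def clique_def adj_def by force
  ultimately show ?thesis using even_pair_or_complete sw_D_empty by blast
qed

end

theorem theorem4p11:
  fixes V :: "'a set" and \<theta> :: "'a \<Rightarrow> 'a \<Rightarrow> int"
  assumes "class_F V \<theta>" and "doubled_graph V \<theta>"
    and "\<not> (\<exists>hs. is_antihole V \<theta> hs \<and> length hs = 6)"
  shows "(complete_tg V \<theta> \<or> (\<exists>u v. even_pair V \<theta> u v)) \<and>
         (favorable V \<theta> \<longrightarrow>
            (\<exists>u v. even_pair V \<theta> u v \<and> u \<notin> sw_D V \<theta> \<and> v \<notin> sw_D V \<theta>))"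
proof -
  obtain X Y where "good_partition V \<theta> X Y" using assms(2) unfolding doubled_graph_def by blast
  moreover have "trigraph V \<theta>" using assms(1) unfolding class_F_def berge_def by blast
  ultimately interpret good_partitioned_F V \<theta> X Y using assms(1,3) by unfold_locales
  show ?thesis
    using even_pair_or_complete even_pair_avoiding_switchable unfolding favorable_def by blast
qed

end
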